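(* Let $\alpha$ be a positive integer, $\gamma$ a positive integer, and $\varepsilon\in\{1,-1\}$. Let $F(z)$ be a formal power series with integer coefficients satisfying $$c_2(z)F^2(z)+c_1(z)F(z)+c_0(z)+3\,\mathcal Q\bigl(z;F(z),F'(z),\dots,F^{(s)}(z)\bigr)=0,$$ where $c_0,c_1,c_2\in\mathbb Z[z]$ and: (1) $c_2(z)\equiv z^{e_1}(1+\varepsilon z^\gamma)^{e_2}$ modulo $3$ for some non-negative integers $e_1,e_2$; (2) $c_1^2(z)-c_0(z)c_2(z)\equiv z^{2f_1}(1+\varepsilon z^\gamma)^{2f_2+1}$ modulo $3$ for some non-negative integers $f_1,f_2$; (3) $\mathcal Q$ is a polynomial with integer coefficients; (4) the equation determines its power series solution uniquely modulo $3^{3^\alpha}$, i.e. any two formal power series with integer coefficients that satisfy the equation modulo $3^{3^\alpha}$ agree modulo $3^{3^\alpha}$. Then there exist $a_0(z),\dots,a_{2\cdot3^\alpha-1}(z)\in\mathbb Z[z,z^{-1},(1+\varepsilon z^\gamma)^{-1}]$ such that $$F(z)=\sum_{i=0}^{2\cdot3^\alpha-1}a_i(z)\Psi^i(\varepsilon z^\gamma)\quad\text{modulo }3^{3^\alpha}.$$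
   Context: $\Psi(z)=\prod_{j\ge0}(1+z^{3^j})$, so $\Psi(\varepsilon z^\gamma)=\prod_{j\ge0}(1+(\varepsilon z^\gamma)^{3^j})$. Congruences "modulo $3^e$" between integral (Laurent) series in $z$ are coefficientwise; rational functions are expanded as Laurent series in $z$. *)

theory Defs
  imports "HOL-Computational_Algebra.Computational_Algebra" "HOL-Number_Theory.Cong"
begin

definition poly_cong :: "int \<Rightarrow> int poly \<Rightarrow> int poly \<Rightarrow> bool" where
  "poly_cong m p q \<longleftrightarrow> (\<forall>n. [coeff p n = coeff q n] (mod m))"

definition fps_cong :: "int \<Rightarrow> int fps \<Rightarrow> int fps \<Rightarrow> bool" where
  "fps_cong m f g \<longleftrightarrow> (\<forall>n. [f $ n = g $ n] (mod m))"

definition fls_cong :: "int \<Rightarrow> int fls \<Rightarrow> int fls \<Rightarrow> bool" where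
  "fls_cong m f g \<longleftrightarrow> (\<forall>n::int. [fls_nth f n = fls_nth g n] (mod m))"

definition lin :: "int \<Rightarrow> nat \<Rightarrow> int poly" where
  "lin eps gam = 1 + monom eps gam"

text \<open>The power series expansion of (1 + eps z^gamma)^(-1), gamma > 0:
  the sum over k of (- eps z^gamma)^k.\<close>
definition inv_lin :: "int \<Rightarrow> nat \<Rightarrow> int fps" where
  "inv_lin eps gam = Abs_fps (\<lambda>n. if gam dvd n then (- eps) ^ (n div gam) else 0)"

text \<open>Psi(eps z^gamma) = prod_{j>=0} (1 + (eps z^gamma)^(3^j)) as a power series
  (gamma > 0): the n-th coefficient is that of the finite partial product over
  j \<le> n, which is already stable since gamma 3^j > n for j > n.\<close>
definition psi :: "int \<Rightarrow> nat \<Rightarrow> int fps" where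
  "psi eps gam = Abs_fps (\<lambda>n.
      (\<Prod>j<Suc n. 1 + (fps_const eps * fps_X ^ gam) ^ (3 ^ j)) $ n)"

text \<open>A polynomial Q(z; y_0, ..., y_s) with integer coefficients, given as a list of
  monomials (c, e, [d_0, ..., d_k]) standing for c z^e y_0^d_0 ... y_k^d_k.\<close>
type_synonym intpolyQ = "(int \<times> nat \<times> nat list) list"

definition Qeval :: "intpolyQ \<Rightarrow> int fps \<Rightarrow> int fps" where
  "Qeval Q G = (\<Sum>(c, e, ds) \<leftarrow> Q.
      fps_const c * fps_X ^ e * (\<Prod>j<length ds. ((fps_deriv ^^ j) G) ^ (ds ! j)))"

definition eqn_lhs :: "int poly \<Rightarrow> int poly \<Rightarrow> int poly \<Rightarrow> intpolyQ \<Rightarrow> int fps \<Rightarrow> int fps" where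
  "eqn_lhs c2 c1 c0 Q G =
     fps_of_poly c2 * G ^ 2 + fps_of_poly c1 * G + fps_of_poly c0 + 3 * Qeval Q G"

end

theory Submission
  imports Defs
begin

text \<open>Write \<open>x = \<epsilon> z\<^sup>\<gamma>\<close> and \<open>m = 3\<^sup>\<alpha>\<close>. As \<open>(1 + x)\<^sup>3 \<equiv> 1 + x\<^sup>3\<close> modulo \<open>3\<close>, the product
  \<open>\<Psi>(x) = \<Prod>\<^sub>j (1 + x\<^bsup>3\<^sup>j\<^esup>)\<close> satisfies \<open>(1 + x) \<Psi>(x)\<^sup>2 \<equiv> 1\<close> modulo \<open>3\<close>. By (1) and (2) the
  discriminant of the quadratic part is \<open>z\<^bsup>2f\<^sub>1\<^esup> (1 + x)\<^bsup>2f\<^sub>2+1\<^esup>\<close> modulo \<open>3\<close>, with square root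
  \<open>z\<^bsup>f\<^sub>1\<^esup> (1 + x)\<^bsup>f\<^sub>2+1\<^esup> \<Psi>(x)\<close>; this gives a root of the equation modulo \<open>3\<close> in the ring
  \<open>R = \<int>[z, z\<^sup>-\<^sup>1, (1 + x)\<^sup>-\<^sup>1, \<Psi>(x)]\<close>. Modulo \<open>3\<^sup>m\<close> the ring \<open>R\<close> is closed under \<open>d/dz\<close>,
  because \<open>\<Psi>'/\<Psi> \<equiv> x'/(1 + x)\<close> there, so Newton iteration can be run inside \<open>R\<close>, along the
  powers of the ideal \<open>(3, (1 + x) \<Psi>\<^sup>2 - 1)\<close>; it yields \<open>G \<in> R\<close> solving the equation modulo
  \<open>3\<^sup>m\<close>. Since \<open>2 c\<^sub>2 F + c\<^sub>1\<close> is a unit modulo \<open>3\<close>, \<open>F \<equiv> G\<close> modulo \<open>3\<^sup>m\<close>. Finally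
  \<open>((1 + x) \<Psi>\<^sup>2)\<^sup>m = (1 + ((1 + x) \<Psi>\<^sup>2 - 1))\<^sup>m\<close> is congruent modulo \<open>3\<^sup>m\<close> to a polynomial of degree
  \<open>< m\<close> in \<open>(1 + x) \<Psi>\<^sup>2\<close>, which reduces every element of \<open>R\<close> to a polynomial in \<open>\<Psi>\<close> of
  degree \<open>< 2m\<close>.\<close>

unbundle fps_syntax

section \<open>The product \<open>\<Psi>\<close>\<close>

definition psi_partial :: "int \<Rightarrow> nat \<Rightarrow> nat \<Rightarrow> int fps" where
  "psi_partial e g K = (\<Prod>j<K. 1 + (fps_const e * fps_X ^ g) ^ 3 ^ j)"

lemma fps_const_X_power_power:
  "(fps_const c * fps_X ^ g) ^ k = fps_const (c ^ k) * (fps_X ^ (g * k) :: 'a::comm_ring_1 fps)"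
  by (simp add: power_mult_distrib power_mult)

lemma psi_partial_Suc:
  "psi_partial e g (Suc K) =
     psi_partial e g K + fps_const (e ^ 3 ^ K) * (fps_X ^ (g * 3 ^ K) * psi_partial e g K)"
proof -
  have "P * (1 + c * Y) = P + c * (Y * P)" for P c Y :: "int fps"
    by (simp add: algebra_simps)
  then show ?thesis
    unfolding psi_partial_def prod.lessThan_Suc fps_const_X_power_power by (simp only:)
qed

lemma psi_partial_add:
  "psi_partial e g (K + N) = psi_partial e g K * psi_partial (e ^ 3 ^ K) (g * 3 ^ K) N"
proof (induction N)
  case (Suc N)
  have "(fps_const (e ^ 3 ^ K) * fps_X ^ (g * 3 ^ K)) ^ 3 ^ N = (fps_const e * fps_X ^ g) ^ 3 ^ (K + N)"
    by (simp add: fps_const_X_power_power power_add flip: power_mult)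
  with Suc show ?case
    by (simp add: psi_partial_def mult.assoc)
qed (simp add: psi_partial_def)

lemma psi_partial_nth_stable:
  assumes "i < g * 3 ^ K" "K \<le> K'"
  shows "psi_partial e g K' $ i = psi_partial e g K $ i"
  using assms(2)
proof (induction K' rule: dec_induct)
  case (step K')
  have "i < g * 3 ^ K'"
    using assms(1) step(1) by (meson less_le_trans mult_le_mono2 one_le_numeral power_increasing)
  with step.IH show ?case
    by (simp add: psi_partial_Suc fps_X_power_mult_nth)
qed simp

lemma less_mult_3_power_Suc:
  fixes g :: nat
  assumes "g > 0" "i \<le> n"
  shows "i < g * 3 ^ Suc n"
proof -
  have "n < 3 ^ Suc n" by (induction n) auto
  also have "\<dots> \<le> g * 3 ^ Suc n" using assms(1) by simp
  finally show ?thesis using assms(2) by linarith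
qed

lemma psi_nth_eq_psi_partial_Suc: "psi e g $ i = psi_partial e g (Suc i) $ i"
  by (simp add: psi_def psi_partial_def)

lemma psi_nth_psi_partial:
  assumes "g > 0" "i < g * 3 ^ K"
  shows "psi e g $ i = psi_partial e g K $ i"
proof -
  have "psi_partial e g (max K (Suc i)) $ i = psi_partial e g (Suc i) $ i"
    using less_mult_3_power_Suc[OF assms(1) order.refl] by (intro psi_partial_nth_stable) simp_all
  moreover have "psi_partial e g (max K (Suc i)) $ i = psi_partial e g K $ i"
    using assms(2) by (intro psi_partial_nth_stable) simp_all
  ultimately show ?thesis
    by (simp add: psi_nth_eq_psi_partial_Suc)
qed

lemma psi_partial_nth_nonzero_imp_dvd: "psi_partial e g K $ i \<noteq> 0 \<Longrightarrow> g dvd i"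
proof (induction K arbitrary: i)
  case (Suc K)
  show ?case
  proof (cases "psi_partial e g K $ i = 0")
    case True
    with Suc.prems have "g * 3 ^ K \<le> i" "psi_partial e g K $ (i - g * 3 ^ K) \<noteq> 0"
      by (auto simp: psi_partial_Suc fps_X_power_mult_nth split: if_splits)
    with Suc.IH show ?thesis
      by (metis dvd_add_right_iff dvd_triv_left le_add_diff_inverse)
  qed (use Suc.IH in blast)
qed (simp add: psi_partial_def split: if_splits)

lemma psi_nth_nonzero_imp_dvd: "psi e g $ i \<noteq> 0 \<Longrightarrow> g dvd i"
  by (simp add: psi_nth_eq_psi_partial_Suc psi_partial_nth_nonzero_imp_dvd)

lemma fps_mult_nth_cong:
  "(\<And>i. i \<le> n \<Longrightarrow> f $ i = f' $ i) \<Longrightarrow> (\<And>i. i \<le> n \<Longrightarrow> g $ i = g' $ i)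
    \<Longrightarrow> (f * g) $ n = (f' * g') $ n"
  by (simp add: fps_mult_nth)

lemma psi_factor:
  assumes "g > 0"
  shows "psi e g = psi_partial e g K * psi (e ^ 3 ^ K) (g * 3 ^ K)"
proof (rule fps_ext)
  fix n
  have small: "i < g * 3 ^ K * 3 ^ Suc n" if "i \<le> n" for i
    using assms that by (intro less_mult_3_power_Suc) simp_all
  have "psi e g $ n = psi_partial e g (K + Suc n) $ n"
    using assms small[of n] by (intro psi_nth_psi_partial) (simp_all add: power_add ac_simps)
  also have "\<dots> = (psi_partial e g K * psi_partial (e ^ 3 ^ K) (g * 3 ^ K) (Suc n)) $ n"
    by (simp only: psi_partial_add)
  also have "\<dots> = (psi_partial e g K * psi (e ^ 3 ^ K) (g * 3 ^ K)) $ n"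
    using assms small
    by (intro fps_mult_nth_cong) (simp_all add: psi_nth_psi_partial[of "g * 3 ^ K" _ "Suc n"])
  finally show "psi e g $ n = (psi_partial e g K * psi (e ^ 3 ^ K) (g * 3 ^ K)) $ n" .
qed

lemma lin_psi_partial_sq:
  "\<exists>w. (1 + fps_const e * fps_X ^ g) * psi_partial e g K ^ 2
          = 1 + (fps_const e * fps_X ^ g) ^ 3 ^ K + 3 * w"
proof (induction K)
  case (Suc K)
  then obtain w where w: "(1 + fps_const e * fps_X ^ g) * psi_partial e g K ^ 2
      = 1 + (fps_const e * fps_X ^ g) ^ 3 ^ K + 3 * w" by blast
  define y where "y = (fps_const e * fps_X ^ g) ^ 3 ^ K"
  have "(1 + fps_const e * fps_X ^ g) * psi_partial e g (Suc K) ^ 2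
      = ((1 + fps_const e * fps_X ^ g) * psi_partial e g K ^ 2) * (1 + y) ^ 2"
    by (simp add: psi_partial_def y_def power_mult_distrib)
  also have "\<dots> = 1 + y ^ 3 + 3 * (y + y ^ 2 + w * (1 + y) ^ 2)"
    unfolding w y_def[symmetric] by (simp add: algebra_simps power2_eq_square power3_eq_cube)
  also have "y ^ 3 = (fps_const e * fps_X ^ g) ^ 3 ^ Suc K"
    by (simp add: y_def flip: power_mult) (simp add: ac_simps)
  finally show ?case by blast
qed (auto simp: psi_partial_def intro: exI[of _ 0])

lemma three_dvd_psi_sq_defect:
  assumes "g > 0"
  shows "3 dvd ((1 + fps_const e * fps_X ^ g) * psi e g ^ 2 - 1) $ n"
proof -
  let ?P = "psi_partial e g (Suc n)"
  obtain w where w: "(1 + fps_const e * fps_X ^ g) * ?P ^ 2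
      = 1 + (fps_const e * fps_X ^ g) ^ 3 ^ Suc n + 3 * w"
    using lin_psi_partial_sq by blast
  have small: "i < g * 3 ^ Suc n" if "i \<le> n" for i
    using assms that by (rule less_mult_3_power_Suc)
  have "(psi e g ^ 2) $ i = (?P ^ 2) $ i" if "i \<le> n" for i
    unfolding power2_eq_square using assms small that
    by (intro fps_mult_nth_cong) (simp_all add: psi_nth_psi_partial)
  then have "((1 + fps_const e * fps_X ^ g) * psi e g ^ 2 - 1) $ n
      = ((1 + fps_const e * fps_X ^ g) * ?P ^ 2 - 1) $ n"
    by (simp add: fps_mult_nth_cong)
  also have "\<dots> = ((fps_const e * fps_X ^ g) ^ 3 ^ Suc n) $ n + 3 * w $ n"
    unfolding w by (simp add: numeral_fps_const)
  also have "((fps_const e * fps_X ^ g) ^ 3 ^ Suc n) $ n = 0"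
    using small[of n] by (simp add: fps_const_X_power_power)
  finally show ?thesis by simp
qed

lemma lin_times_inv_lin:
  assumes "gam > 0"
  shows "(1 + fps_const eps * fps_X ^ gam) * inv_lin eps gam = 1"
proof (rule fps_ext)
  fix n
  let ?i = "inv_lin eps gam"
  have "((1 + fps_const eps * fps_X ^ gam) * ?i) $ n
      = ?i $ n + eps * (if n < gam then 0 else ?i $ (n - gam))"
    by (simp add: distrib_right mult.assoc fps_X_power_mult_nth)
  also have "\<dots> = (1 :: int fps) $ n"
  proof (cases "gam dvd n")
    case True
    then obtain t where t: "n = gam * t" by blast
    show ?thesis
    proof (cases t)
      case (Suc t')
      then have "\<not> n < gam" "n - gam = gam * t'"
        using t by (simp_all add: algebra_simps)
      then show ?thesis
        using t Suc assms by (simp add: inv_lin_def)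
    qed (use t assms in \<open>simp add: inv_lin_def\<close>)
  next
    case False
    then have "\<not> gam dvd (n - gam)" if "\<not> n < gam"
      using that by (metis dvd_add_right_iff dvd_refl le_add_diff_inverse2 not_less)
    with False show ?thesis
      using assms by (cases "n = 0") (auto simp: inv_lin_def)
  qed
  finally show "((1 + fps_const eps * fps_X ^ gam) * ?i) $ n = (1 :: int fps) $ n" .
qed

section \<open>Divisibility of coefficients\<close>

definition coeffs_dvd :: "int \<Rightarrow> int fls \<Rightarrow> bool" where
  "coeffs_dvd p f \<longleftrightarrow> (\<forall>n. p dvd f $$ n)"

lemma fls_cong_iff_coeffs_dvd: "fls_cong p f g \<longleftrightarrow> coeffs_dvd p (f - g)"
  by (simp add: fls_cong_def coeffs_dvd_def cong_iff_dvd_diff)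

lemma coeffs_dvd_0 [simp]: "coeffs_dvd p 0"
  by (simp add: coeffs_dvd_def)

lemma coeffs_dvd_add: "coeffs_dvd p f \<Longrightarrow> coeffs_dvd p g \<Longrightarrow> coeffs_dvd p (f + g)"
  by (simp add: coeffs_dvd_def)

lemma coeffs_dvd_diff: "coeffs_dvd p f \<Longrightarrow> coeffs_dvd p g \<Longrightarrow> coeffs_dvd p (f - g)"
  by (simp add: coeffs_dvd_def)

lemma coeffs_dvd_mult_right: "coeffs_dvd p f \<Longrightarrow> coeffs_dvd p (f * g)"
  unfolding coeffs_dvd_def by (auto simp: fls_times_nth(2) intro!: dvd_sum)

lemma coeffs_dvd_mult_left: "coeffs_dvd p g \<Longrightarrow> coeffs_dvd p (f * g)"
  using coeffs_dvd_mult_right[of p g f] by (simp add: mult.commute)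

lemma coeffs_dvd_of_int_mult [simp]: "coeffs_dvd p (of_int p * f)"
  by (simp add: coeffs_dvd_def)

lemma coeffs_dvd_numeral_mult [simp]: "coeffs_dvd (numeral k) (numeral k * f)"
  using coeffs_dvd_of_int_mult[of "numeral k" f] by simp

lemma coeffs_dvd_scale: "coeffs_dvd p f \<Longrightarrow> coeffs_dvd (q * p) (of_int q * f)"
  by (simp add: coeffs_dvd_def mult_dvd_mono)

lemma coeffs_dvd_cancel: "p \<noteq> 0 \<Longrightarrow> coeffs_dvd (p * q) (of_int p * f) \<Longrightarrow> coeffs_dvd q f"
  by (simp add: coeffs_dvd_def)

lemma coeffs_dvd_dvd_trans: "q dvd p \<Longrightarrow> coeffs_dvd p f \<Longrightarrow> coeffs_dvd q f"
  unfolding coeffs_dvd_def using dvd_trans by blast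

lemma coeffs_dvd_deriv: "coeffs_dvd p f \<Longrightarrow> coeffs_dvd p (fls_deriv f)"
  by (simp add: coeffs_dvd_def)

lemma coeffs_dvd_fps_to_fls: "coeffs_dvd p (fps_to_fls g) \<longleftrightarrow> (\<forall>n. p dvd g $ n)"
  unfolding coeffs_dvd_def by (metis fps_to_fls_nth dvd_0_right nat_int of_nat_less_0_iff)

lemma coeffs_dvd_imp_eq_mult:
  assumes "p \<noteq> 0" "coeffs_dvd p f"
  shows "\<exists>c. f = of_int p * c"
proof -
  define c where "c = Abs_fls (\<lambda>n. f $$ n div p)"
  have "c $$ n = f $$ n div p" for n
    unfolding c_def by (rule nth_Abs_fls_ex_lower_bound) (auto intro: exI[of _ "fls_subdegree f"])
  then have "f = of_int p * c"
    using assms by (intro fls_eqI) (simp add: coeffs_dvd_def)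
  then show ?thesis by blast
qed

lemma least_coeff_not_dvd:
  assumes "\<not> coeffs_dvd p a"
  obtains i where "\<not> p dvd a $$ i" "\<And>j. j < i \<Longrightarrow> p dvd a $$ j"
proof -
  let ?d = "fls_subdegree a"
  obtain n where n: "\<not> p dvd a $$ n"
    using assms by (auto simp: coeffs_dvd_def)
  then have "n \<ge> ?d"
    by (metis dvd_0_right fls_eq0_below_subdegree not_le)
  then have "\<exists>k::nat. \<not> p dvd a $$ (?d + int k)"
    using n by (intro exI[of _ "nat (n - ?d)"]) simp
  then obtain k :: nat where k: "\<not> p dvd a $$ (?d + int k)"
    and below: "\<And>k'. k' < k \<Longrightarrow> p dvd a $$ (?d + int k')"
    unfolding exists_least_iff[of "\<lambda>k. \<not> p dvd a $$ (?d + int k)"] by blast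
  have "p dvd a $$ j" if "j < ?d + int k" for j
  proof (cases "j < ?d")
    case False
    then show ?thesis
      using below[of "nat (j - ?d)"] that by simp
  qed simp
  with k that show ?thesis by blast
qed

lemma coeffs_dvd_prime_mult:
  assumes "prime p" "coeffs_dvd p (a * b)"
  shows "coeffs_dvd p a \<or> coeffs_dvd p b"
proof (rule ccontr)
  assume "\<not> (coeffs_dvd p a \<or> coeffs_dvd p b)"
  then obtain i j where i: "\<not> p dvd a $$ i" "\<And>i'. i' < i \<Longrightarrow> p dvd a $$ i'"
    and j: "\<not> p dvd b $$ j" "\<And>j'. j' < j \<Longrightarrow> p dvd b $$ j'"
    by (meson least_coeff_not_dvd)
  let ?da = "fls_subdegree a" and ?db = "fls_subdegree b"
  have "i \<ge> ?da" "j \<ge> ?db"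
    using i(1) j(1) by (metis dvd_0_right fls_eq0_below_subdegree not_le)+
  then have mem: "i \<in> {?da..i + j - ?db}" by simp
  have rest: "p dvd (\<Sum>k\<in>{?da..i + j - ?db} - {i}. a $$ k * b $$ (i + j - k))"
  proof (rule dvd_sum)
    fix k assume "k \<in> {?da..i + j - ?db} - {i}"
    then have "k < i \<or> i + j - k < j" by auto
    then show "p dvd a $$ k * b $$ (i + j - k)"
      using i(2) j(2) by auto
  qed
  have "(a * b) $$ (i + j) = a $$ i * b $$ j + (\<Sum>k\<in>{?da..i + j - ?db} - {i}. a $$ k * b $$ (i + j - k))"
    unfolding fls_times_nth(2) by (subst sum.remove[OF _ mem]) simp_all
  moreover have "p dvd (a * b) $$ (i + j)"
    using assms(2) by (simp add: coeffs_dvd_def)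
  ultimately have "p dvd a $$ i * b $$ j"
    using rest by (simp add: dvd_add_left_iff)
  with assms(1) i(1) j(1) show False
    by (simp add: prime_dvd_mult_iff)
qed

lemma fls_deriv_numeral_power [simp]: "fls_deriv (numeral n ^ j :: int fls) = 0"
  by (metis fls_deriv_of_int of_int_numeral of_int_power)

definition fls_of_poly :: "int poly \<Rightarrow> int fls" where
  "fls_of_poly p = fps_to_fls (fps_of_poly p)"

lemma fls_of_poly_0 [simp]: "fls_of_poly 0 = 0"
  and fls_of_poly_1 [simp]: "fls_of_poly 1 = 1"
  and fls_of_poly_add [simp]: "fls_of_poly (p + q) = fls_of_poly p + fls_of_poly q"
  and fls_of_poly_diff [simp]: "fls_of_poly (p - q) = fls_of_poly p - fls_of_poly q"
  and fls_of_poly_mult [simp]: "fls_of_poly (p * q) = fls_of_poly p * fls_of_poly q"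
  and fls_of_poly_smult [simp]: "fls_of_poly (smult c p) = fls_const c * fls_of_poly p"
  and fls_of_poly_monom [simp]: "fls_of_poly (monom c n) = fls_const c * fls_X ^ n"
  and fls_of_poly_pCons: "fls_of_poly (pCons c p) = fls_const c + fls_of_poly p * fls_X"
  by (simp_all add: fls_of_poly_def fps_of_poly_add fps_of_poly_diff fps_of_poly_mult
      fps_of_poly_smult fps_of_poly_monom fps_of_poly_pCons fls_times_fps_to_fls fps_to_fls_power)

lemma fls_of_poly_power [simp]: "fls_of_poly (p ^ n) = fls_of_poly p ^ n"
  by (induction n) simp_all

lemma poly_cong_imp_eq_smult:
  assumes "poly_cong m a b"
  shows "\<exists>p. a = b + smult m p"
proof -
  define p where "p = map_poly (\<lambda>c. c div m) (a - b)"
  have "a - b = smult m p"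
  proof (rule poly_eqI)
    fix n
    have "m dvd coeff (a - b) n"
      using assms by (simp add: poly_cong_def cong_iff_dvd_diff)
    then show "coeff (a - b) n = coeff (smult m p) n"
      by (simp add: p_def coeff_map_poly)
  qed
  then show ?thesis
    by (intro exI[of _ p]) (simp add: algebra_simps)
qed

section \<open>Differential polynomials\<close>

definition Qeval_fls :: "intpolyQ \<Rightarrow> int fls \<Rightarrow> int fls" where
  "Qeval_fls Q g = (\<Sum>(c, e, ds) \<leftarrow> Q.
      fls_const c * fls_X ^ e * (\<Prod>j<length ds. ((fls_deriv ^^ j) g) ^ (ds ! j)))"

definition eqn_lhs_fls :: "int poly \<Rightarrow> int poly \<Rightarrow> int poly \<Rightarrow> intpolyQ \<Rightarrow> int fls \<Rightarrow> int fls" where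
  "eqn_lhs_fls c2 c1 c0 Q g =
     fls_of_poly c2 * g ^ 2 + fls_of_poly c1 * g + fls_of_poly c0 + 3 * Qeval_fls Q g"

lemma fps_to_fls_prod: "fps_to_fls (prod f A) = (\<Prod>i\<in>A. fps_to_fls (f i) :: 'a::comm_ring_1 fls)"
  by (induction A rule: infinite_finite_induct) (simp_all add: fls_times_fps_to_fls)

lemma fps_to_fls_deriv_iter:
  "fps_to_fls ((fps_deriv ^^ j) G) = (fls_deriv ^^ j) (fps_to_fls (G :: 'a::comm_ring_1 fps))"
  by (induction j) (simp_all flip: fls_deriv_fps_to_fls)

lemma fps_to_fls_Qeval: "fps_to_fls (Qeval Q G) = Qeval_fls Q (fps_to_fls G)"
  by (induction Q)
    (auto simp: Qeval_def Qeval_fls_def fls_times_fps_to_fls fps_to_fls_power fps_to_fls_prod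
      fps_to_fls_deriv_iter)

lemma fps_to_fls_eqn_lhs: "fps_to_fls (eqn_lhs c2 c1 c0 Q G) = eqn_lhs_fls c2 c1 c0 Q (fps_to_fls G)"
  by (simp add: eqn_lhs_def eqn_lhs_fls_def fps_to_fls_Qeval fls_of_poly_def fls_times_fps_to_fls
      fps_to_fls_power)

lemma fls_deriv_iter_diff: "(fls_deriv ^^ j) a - (fls_deriv ^^ j) b = (fls_deriv ^^ j) (a - b)"
  by (induction j) (simp_all flip: fls_deriv_sub)

locale deriv_ideal =
  fixes S I :: "int fls set"
  assumes S_const: "fls_const c \<in> S" and S_X: "fls_X \<in> S"
    and S_add: "a \<in> S \<Longrightarrow> b \<in> S \<Longrightarrow> a + b \<in> S"
    and S_mult: "a \<in> S \<Longrightarrow> b \<in> S \<Longrightarrow> a * b \<in> S"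
    and S_deriv: "a \<in> S \<Longrightarrow> fls_deriv a \<in> S"
    and I_0: "0 \<in> I"
    and I_add: "a \<in> I \<Longrightarrow> b \<in> I \<Longrightarrow> a + b \<in> I"
    and I_mult: "a \<in> I \<Longrightarrow> r \<in> S \<Longrightarrow> r * a \<in> I"
    and I_deriv: "a \<in> I \<Longrightarrow> fls_deriv a \<in> I"
begin

lemma S_power: "a \<in> S \<Longrightarrow> a ^ n \<in> S"
  using S_const[of 1] by (induction n) (auto intro: S_mult)

lemma S_prod: "(\<And>i. i \<in> A \<Longrightarrow> f i \<in> S) \<Longrightarrow> prod f A \<in> S"
  using S_const[of 1] by (induction A rule: infinite_finite_induct) (auto intro: S_mult)

lemma S_deriv_iter: "a \<in> S \<Longrightarrow> (fls_deriv ^^ j) a \<in> S"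
  by (induction j) (auto intro: S_deriv)

lemma I_deriv_iter: "a \<in> I \<Longrightarrow> (fls_deriv ^^ j) a \<in> I"
  by (induction j) (auto intro: I_deriv)

lemma I_power_diff: "a \<in> S \<Longrightarrow> b \<in> S \<Longrightarrow> a - b \<in> I \<Longrightarrow> a ^ n - b ^ n \<in> I"
proof (induction n)
  case (Suc n)
  have "a ^ Suc n - b ^ Suc n = a * (a ^ n - b ^ n) + b ^ n * (a - b)"
    by (simp add: algebra_simps)
  then show ?case
    using Suc by (auto intro!: I_add I_mult S_power)
qed (simp add: I_0)

lemma I_prod_diff:
  "(\<And>i. i < (n::nat) \<Longrightarrow> f i \<in> S) \<Longrightarrow> (\<And>i. i < n \<Longrightarrow> g i \<in> S) \<Longrightarrow> (\<And>i. i < n \<Longrightarrow> f i - g i \<in> I)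
    \<Longrightarrow> (\<Prod>i<n. f i) - (\<Prod>i<n. g i) \<in> I"
proof (induction n)
  case (Suc n)
  have "(\<Prod>i<Suc n. f i) - (\<Prod>i<Suc n. g i)
      = f n * ((\<Prod>i<n. f i) - (\<Prod>i<n. g i)) + (\<Prod>i<n. g i) * (f n - g n)"
    by (simp add: algebra_simps)
  then show ?case
    using Suc by (auto intro!: I_add I_mult S_prod)
qed (simp add: I_0)

lemma Qeval_fls_closed: "g \<in> S \<Longrightarrow> Qeval_fls Q g \<in> S"
proof (induction Q)
  case Nil
  then show ?case using S_const[of 0] by (simp add: Qeval_fls_def)
next
  case (Cons q Q)
  obtain c e ds where q: "q = (c, e, ds)" by (cases q) auto
  show ?case using Cons
    by (simp add: Qeval_fls_def q)
      (intro S_add S_mult S_const S_power S_X S_prod S_deriv_iter, auto simp: Qeval_fls_def)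
qed

lemma Qeval_fls_diff: "g \<in> S \<Longrightarrow> h \<in> S \<Longrightarrow> g - h \<in> I \<Longrightarrow> Qeval_fls Q g - Qeval_fls Q h \<in> I"
proof (induction Q)
  case Nil
  then show ?case by (simp add: Qeval_fls_def I_0)
next
  case (Cons q Q)
  obtain c e ds where q: "q = (c, e, ds)" by (cases q) auto
  let ?P = "\<lambda>g. (\<Prod>j<length ds. ((fls_deriv ^^ j) g) ^ (ds ! j))"
  have "?P g - ?P h \<in> I"
    using Cons.prems
    by (intro I_prod_diff I_power_diff S_power S_deriv_iter)
      (auto simp: fls_deriv_iter_diff intro: I_deriv_iter)
  moreover have "Qeval_fls (q # Q) g - Qeval_fls (q # Q) h
      = (fls_const c * fls_X ^ e) * (?P g - ?P h) + (Qeval_fls Q g - Qeval_fls Q h)"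
    by (simp add: Qeval_fls_def q algebra_simps)
  ultimately show ?case
    using Cons by (auto intro!: I_add I_mult S_mult S_const S_power S_X)
qed

end

lemma deriv_ideal_coeffs_dvd: "deriv_ideal UNIV {f. coeffs_dvd p f}"
  by unfold_locales (auto intro: coeffs_dvd_add coeffs_dvd_mult_left coeffs_dvd_deriv)

section \<open>The ring generated by \<open>\<Psi>\<close>\<close>

locale psi_setting =
  fixes eps :: int and gam :: nat and m :: nat
  assumes gam_pos: "gam > 0" and m_pos: "m > 0"
begin

definition xpow :: "nat \<Rightarrow> int fls" where
  "xpow j = fls_const (eps ^ 3 ^ j) * fls_X ^ (gam * 3 ^ j)"

definition lin_fls :: "int fls" where "lin_fls = fls_of_poly (lin eps gam)"
definition inv_lin_fls :: "int fls" where "inv_lin_fls = fps_to_fls (inv_lin eps gam)"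
definition Psi :: "int fls" where "Psi = fps_to_fls (psi eps gam)"
definition defect :: "int fls" where "defect = lin_fls * Psi ^ 2 - 1"
definition modulus :: int where "modulus = 3 ^ m"

lemma lin_fls_eq: "lin_fls = 1 + xpow 0"
  by (simp add: lin_fls_def lin_def xpow_def)

lemma xpow_eq_fps_to_fls: "xpow j = fps_to_fls ((fps_const eps * fps_X ^ gam) ^ 3 ^ j)"
  by (simp add: xpow_def fps_const_X_power_power fls_times_fps_to_fls fps_to_fls_power)

lemma xpow_cube: "xpow j ^ 3 = xpow (Suc j)"
  by (simp add: xpow_def power_mult_distrib fls_const_power flip: power_mult) (simp add: ac_simps)

lemma lin_times_inv_lin_fls: "lin_fls * inv_lin_fls = 1"
proof -
  have "fps_to_fls ((1 + fps_const eps * fps_X ^ gam) * inv_lin eps gam) = 1"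
    using lin_times_inv_lin[OF gam_pos] by simp
  then show ?thesis
    by (simp add: lin_fls_eq xpow_eq_fps_to_fls inv_lin_fls_def fls_times_fps_to_fls)
qed

lemma inv_lin_times_lin_fls: "inv_lin_fls * lin_fls = 1"
  using lin_times_inv_lin_fls by (simp add: mult.commute)

lemma coeffs_dvd_defect: "coeffs_dvd 3 defect"
proof -
  have e: "defect = fps_to_fls ((1 + fps_const eps * fps_X ^ gam) * psi eps gam ^ 2 - 1)"
    by (simp add: defect_def Psi_def lin_fls_eq xpow_eq_fps_to_fls fls_times_fps_to_fls fps_to_fls_power)
  show ?thesis
    unfolding e coeffs_dvd_fps_to_fls using three_dvd_psi_sq_defect[OF gam_pos] by blast
qed

lemma defect_eq_3_mult: "\<exists>w. defect = 3 * w"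
  using coeffs_dvd_imp_eq_mult[OF _ coeffs_dvd_defect] by simp

text \<open>\<open>Rpsi\<close> is \<open>R + 3\<^sup>m \<int>((z))\<close>; the second summand lets us argue modulo \<open>3\<^sup>m\<close> inside
  the ring.\<close>

inductive_set Rpsi :: "int fls set" where
  Rpsi_const: "fls_const c \<in> Rpsi"
| Rpsi_X: "fls_X \<in> Rpsi"
| Rpsi_X_inv: "fls_X_inv \<in> Rpsi"
| Rpsi_inv_lin: "inv_lin_fls \<in> Rpsi"
| Rpsi_Psi: "Psi \<in> Rpsi"
| Rpsi_modulus_mult: "of_int modulus * a \<in> Rpsi"
| Rpsi_add: "a \<in> Rpsi \<Longrightarrow> b \<in> Rpsi \<Longrightarrow> a + b \<in> Rpsi"
| Rpsi_mult: "a \<in> Rpsi \<Longrightarrow> b \<in> Rpsi \<Longrightarrow> a * b \<in> Rpsi"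

lemma Rpsi_0 [simp]: "0 \<in> Rpsi"
  and Rpsi_1 [simp]: "1 \<in> Rpsi"
  and Rpsi_numeral [simp]: "numeral k \<in> Rpsi"
  using Rpsi_const[of 0] Rpsi_const[of 1] Rpsi_const[of "numeral k"] by simp_all

lemma Rpsi_of_int [simp]: "of_int c \<in> Rpsi"
  using Rpsi_const[of c] by (simp add: fls_of_int)

lemma Rpsi_of_nat [simp]: "of_nat c \<in> Rpsi"
  using Rpsi_of_int[of "int c"] by simp

lemma Rpsi_uminus: "a \<in> Rpsi \<Longrightarrow> - a \<in> Rpsi"
  using Rpsi_mult[OF Rpsi_const[of "-1"]] by (simp add: fls_const_uminus[symmetric])

lemma Rpsi_diff: "a \<in> Rpsi \<Longrightarrow> b \<in> Rpsi \<Longrightarrow> a - b \<in> Rpsi"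
  using Rpsi_add Rpsi_uminus by (metis diff_conv_add_uminus)

lemma Rpsi_power: "a \<in> Rpsi \<Longrightarrow> a ^ n \<in> Rpsi"
  by (induction n) (auto intro: Rpsi_mult)

lemma Rpsi_sum: "(\<And>i. i \<in> A \<Longrightarrow> f i \<in> Rpsi) \<Longrightarrow> sum f A \<in> Rpsi"
  by (induction A rule: infinite_finite_induct) (auto intro: Rpsi_add)

lemma Rpsi_prod: "(\<And>i. i \<in> A \<Longrightarrow> f i \<in> Rpsi) \<Longrightarrow> prod f A \<in> Rpsi"
  by (induction A rule: infinite_finite_induct) (auto intro: Rpsi_mult)

lemma Rpsi_xpow: "xpow j \<in> Rpsi"
  unfolding xpow_def by (intro Rpsi_mult Rpsi_power Rpsi_const Rpsi_X)

lemma Rpsi_fls_of_poly: "fls_of_poly p \<in> Rpsi"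
  by (induction p) (auto simp: fls_of_poly_pCons intro!: Rpsi_add Rpsi_mult Rpsi_const Rpsi_X)

lemma Rpsi_lin: "lin_fls \<in> Rpsi"
  by (simp add: lin_fls_def Rpsi_fls_of_poly)

lemma Rpsi_defect: "defect \<in> Rpsi"
  unfolding defect_def by (intro Rpsi_diff Rpsi_mult Rpsi_power Rpsi_lin Rpsi_Psi Rpsi_1)

lemma deriv_xpow:
  "fls_deriv (xpow j) = fls_const (eps ^ 3 ^ j) * (of_nat (gam * 3 ^ j) * fls_X ^ (gam * 3 ^ j - 1))"
  by (simp only: xpow_def fls_deriv_mult_const_left fls_deriv_X_power)

lemma Rpsi_deriv_xpow: "fls_deriv (xpow j) \<in> Rpsi"
  unfolding deriv_xpow by (intro Rpsi_mult Rpsi_power Rpsi_const Rpsi_X Rpsi_of_nat)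

lemma deriv_xpow_Suc: "\<exists>t \<in> Rpsi. fls_deriv (xpow (Suc j)) = 3 * t"
proof -
  let ?t = "fls_const (eps ^ 3 ^ Suc j) * (of_nat (gam * 3 ^ j) * fls_X ^ (gam * 3 ^ Suc j - 1))"
  have "fls_deriv (xpow (Suc j)) = 3 * ?t"
    unfolding deriv_xpow by (simp add: algebra_simps)
  moreover have "?t \<in> Rpsi"
    by (intro Rpsi_mult Rpsi_power Rpsi_const Rpsi_X Rpsi_of_nat)
  ultimately show ?thesis by blast
qed

lemma deriv_inv_lin: "fls_deriv inv_lin_fls = - (inv_lin_fls ^ 2 * fls_deriv (xpow 0))"
proof -
  have "lin_fls * fls_deriv inv_lin_fls + fls_deriv (xpow 0) * inv_lin_fls = 0"
    using arg_cong[OF lin_times_inv_lin_fls, of fls_deriv] by (simp add: lin_fls_eq)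
  then have "(lin_fls * inv_lin_fls) * fls_deriv inv_lin_fls + inv_lin_fls ^ 2 * fls_deriv (xpow 0) = 0"
    by (metis (no_types, lifting) distrib_left mult.assoc mult.commute mult_zero_right power2_eq_square)
  then show ?thesis
    by (simp add: lin_times_inv_lin_fls eq_neg_iff_add_eq_0)
qed

text \<open>Modulo 3 the map \<open>f \<mapsto> f ^ 3\<close> is additive, so \<open>(1 + x) ^ 3 ^ j \<equiv> 1 + x ^ 3 ^ j\<close>.\<close>

lemma lin_power_3_power: "\<exists>s \<in> Rpsi. lin_fls ^ 3 ^ j = 1 + xpow j + 3 * s"
proof (induction j)
  case 0
  show ?case by (intro bexI[of _ 0]) (simp_all add: lin_fls_eq)
next
  case (Suc j)
  then obtain s where s: "s \<in> Rpsi" "lin_fls ^ 3 ^ j = 1 + xpow j + 3 * s" by blast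
  define y where "y = xpow j"
  define s' where "s' = y + y ^ 2 + 3 * (1 + y) ^ 2 * s + 9 * (1 + y) * s ^ 2 + 9 * s ^ 3"
  have "lin_fls ^ 3 ^ Suc j = (lin_fls ^ 3 ^ j) ^ 3"
    by (simp flip: power_mult add: mult.commute)
  also have "\<dots> = (1 + y + 3 * s) ^ 3"
    by (simp add: s(2) y_def)
  also have "\<dots> = 1 + y ^ 3 + 3 * s'"
    unfolding s'_def by (simp add: algebra_simps power2_eq_square power3_eq_cube)
  finally have "lin_fls ^ 3 ^ Suc j = 1 + xpow (Suc j) + 3 * s'"
    by (simp add: y_def xpow_cube)
  moreover have "s' \<in> Rpsi"
    unfolding s'_def y_def by (intro Rpsi_add Rpsi_mult Rpsi_power Rpsi_xpow Rpsi_numeral Rpsi_1 s(1))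
  ultimately show ?case by blast
qed

lemma one_plus_xpow_invertible: "\<exists>q \<in> Rpsi. \<exists>a. (1 + xpow j) * q = 1 + of_int modulus * a"
proof -
  obtain s where s: "s \<in> Rpsi" "lin_fls ^ 3 ^ j = 1 + xpow j + 3 * s"
    using lin_power_3_power by blast
  define u where "u = s * inv_lin_fls ^ 3 ^ j"
  have "(1 + xpow j) * inv_lin_fls ^ 3 ^ j = (lin_fls * inv_lin_fls) ^ 3 ^ j - 3 * u"
    by (simp add: s(2) u_def power_mult_distrib algebra_simps)
  then have e: "(1 + xpow j) * inv_lin_fls ^ 3 ^ j = 1 - 3 * u"
    by (simp add: lin_times_inv_lin_fls)
  define q where "q = inv_lin_fls ^ 3 ^ j * (\<Sum>k<m. (3 * u) ^ k)"
  have "(1 + xpow j) * q = (1 - 3 * u) * (\<Sum>k<m. (3 * u) ^ k)"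
    unfolding q_def e[symmetric] by (simp add: mult.assoc)
  also have "\<dots> = 1 - (3 * u) ^ m"
    by (rule one_diff_power_eq[symmetric])
  also have "\<dots> = 1 + of_int modulus * (- (u ^ m))"
    by (simp add: power_mult_distrib modulus_def)
  finally have "(1 + xpow j) * q = 1 + of_int modulus * (- (u ^ m))" .
  moreover have "q \<in> Rpsi"
    unfolding q_def u_def using s(1) by (intro Rpsi_mult Rpsi_power Rpsi_sum Rpsi_inv_lin Rpsi_numeral)
  ultimately show ?thesis by blast
qed

definition upper_prod :: "nat \<Rightarrow> int fls" where
  "upper_prod n = (\<Prod>j<n. 1 + xpow (Suc j))"

lemma Rpsi_upper_prod: "upper_prod n \<in> Rpsi"
  unfolding upper_prod_def by (intro Rpsi_prod Rpsi_add Rpsi_1 Rpsi_xpow)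

lemma deriv_upper_prod: "\<exists>T \<in> Rpsi. fls_deriv (upper_prod n) = 3 * T"
proof (induction n)
  case (Suc n)
  obtain T where T: "T \<in> Rpsi" "fls_deriv (upper_prod n) = 3 * T"
    using Suc.IH by blast
  obtain t where t: "t \<in> Rpsi" "fls_deriv (xpow (Suc n)) = 3 * t"
    using deriv_xpow_Suc by blast
  have "fls_deriv (upper_prod (Suc n)) = 3 * (upper_prod n * t + T * (1 + xpow (Suc n)))"
    using T t by (simp add: upper_prod_def algebra_simps)
  moreover have "upper_prod n * t + T * (1 + xpow (Suc n)) \<in> Rpsi"
    by (intro Rpsi_add Rpsi_mult Rpsi_upper_prod T(1) t(1) Rpsi_1 Rpsi_xpow)
  ultimately show ?case by blast
qed (auto simp: upper_prod_def intro: bexI[of _ 0])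

lemma upper_prod_invertible: "\<exists>q \<in> Rpsi. \<exists>a. upper_prod n * q = 1 + of_int modulus * a"
proof (induction n)
  case (Suc n)
  obtain q a where q: "q \<in> Rpsi" "upper_prod n * q = 1 + of_int modulus * a"
    using Suc.IH by blast
  obtain q' a' where q': "q' \<in> Rpsi" "(1 + xpow (Suc n)) * q' = 1 + of_int modulus * a'"
    using one_plus_xpow_invertible by blast
  have "upper_prod (Suc n) * (q * q') = (upper_prod n * q) * ((1 + xpow (Suc n)) * q')"
    by (simp add: upper_prod_def algebra_simps)
  also have "\<dots> = 1 + of_int modulus * (a + a' + of_int modulus * a * a')"
    unfolding q(2) q'(2) by (simp add: algebra_simps)
  finally show ?case
    using q(1) q'(1) Rpsi_mult by blast
qed (auto simp: upper_prod_def intro!: bexI[of _ 1] exI[of _ 0])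

definition Psi_tail :: "int fls" where
  "Psi_tail = fps_to_fls (psi (eps ^ 3 ^ m) (gam * 3 ^ m))"

lemma Psi_factor: "Psi = lin_fls * upper_prod (m - 1) * Psi_tail"
proof -
  have "Psi = fps_to_fls (psi_partial eps gam m) * Psi_tail"
    unfolding Psi_def Psi_tail_def psi_factor[OF gam_pos, of eps m] by (simp add: fls_times_fps_to_fls)
  also have "fps_to_fls (psi_partial eps gam m) = (\<Prod>j<m. 1 + xpow j)"
    by (induction m) (simp_all add: psi_partial_def xpow_eq_fps_to_fls fls_times_fps_to_fls)
  also have "\<dots> = lin_fls * upper_prod (m - 1)"
    using m_pos prod.lessThan_Suc_shift[of "\<lambda>j. 1 + xpow j" "m - 1"]
    by (simp add: upper_prod_def lin_fls_eq)
  finally show ?thesis .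
qed

text \<open>\<open>Psi_tail\<close> is a series in \<open>z ^ (\<gamma> * 3 ^ m)\<close>, so its derivative vanishes modulo \<open>3 ^ m\<close>.\<close>

lemma deriv_Psi_tail: "\<exists>c. fls_deriv Psi_tail = of_int modulus * c"
proof -
  have "modulus dvd fps_deriv (psi (eps ^ 3 ^ m) (gam * 3 ^ m)) $ n" for n
  proof (cases "psi (eps ^ 3 ^ m) (gam * 3 ^ m) $ Suc n = 0")
    case False
    then have "gam * 3 ^ m dvd Suc n"
      using psi_nth_nonzero_imp_dvd by blast
    then have "modulus dvd int (Suc n)"
      unfolding modulus_def by (metis dvd_mult_right of_nat_dvd_iff of_nat_numeral of_nat_power)
    then show ?thesis
      by (simp add: fps_deriv_nth add.commute)
  qed simp
  then have "coeffs_dvd modulus (fls_deriv Psi_tail)"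
    by (simp add: Psi_tail_def fls_deriv_fps_to_fls coeffs_dvd_fps_to_fls)
  then show ?thesis
    by (rule coeffs_dvd_imp_eq_mult[rotated]) (simp add: modulus_def)
qed

lemma deriv_Psi:
  "\<exists>r \<in> Rpsi. \<exists>c. fls_deriv Psi = Psi * (fls_deriv (xpow 0) * inv_lin_fls + 3 * r) + of_int modulus * c"
proof -
  let ?Q = "upper_prod (m - 1)"
  obtain T where T: "T \<in> Rpsi" "fls_deriv ?Q = 3 * T"
    using deriv_upper_prod by blast
  obtain q a where q: "q \<in> Rpsi" "?Q * q = 1 + of_int modulus * a"
    using upper_prod_invertible by blast
  obtain c where c: "fls_deriv Psi_tail = of_int modulus * c"
    using deriv_Psi_tail by blast
  have "fls_deriv Psi = fls_deriv (xpow 0) * ?Q * Psi_tail + lin_fls * (3 * T) * Psi_tail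
      + lin_fls * ?Q * (of_int modulus * c)"
    unfolding Psi_factor using T(2) c by (simp add: lin_fls_eq algebra_simps)
  also have "\<dots> = Psi * (fls_deriv (xpow 0) * inv_lin_fls + 3 * (T * q))
      + of_int modulus * (lin_fls * ?Q * c - 3 * T * lin_fls * Psi_tail * a)"
  proof -
    have "Psi * (fls_deriv (xpow 0) * inv_lin_fls)
        = fls_deriv (xpow 0) * ?Q * Psi_tail * (lin_fls * inv_lin_fls)"
      unfolding Psi_factor by (simp add: algebra_simps)
    then have h1: "Psi * (fls_deriv (xpow 0) * inv_lin_fls) = fls_deriv (xpow 0) * ?Q * Psi_tail"
      by (simp add: lin_times_inv_lin_fls)
    have "Psi * (3 * (T * q)) = 3 * T * lin_fls * Psi_tail * (?Q * q)"
      unfolding Psi_factor by (simp add: algebra_simps)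
    then have h2: "Psi * (3 * (T * q)) = 3 * T * lin_fls * Psi_tail * (1 + of_int modulus * a)"
      by (simp only: q(2))
    show ?thesis
      by (simp only: distrib_left h1 h2) (simp add: algebra_simps)
  qed
  finally show ?thesis
    using T(1) q(1) Rpsi_mult by blast
qed

lemma Rpsi_deriv: "a \<in> Rpsi \<Longrightarrow> fls_deriv a \<in> Rpsi"
proof (induction rule: Rpsi.induct)
  case Rpsi_X_inv
  then show ?case by (auto intro!: Rpsi_uminus Rpsi_power Rpsi.intros)
next
  case Rpsi_inv_lin
  then show ?case
    unfolding deriv_inv_lin by (intro Rpsi_uminus Rpsi_mult Rpsi_power Rpsi.intros Rpsi_deriv_xpow)
next
  case Rpsi_Psi
  obtain r c where "r \<in> Rpsi"
    "fls_deriv Psi = Psi * (fls_deriv (xpow 0) * inv_lin_fls + 3 * r) + of_int modulus * c"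
    using deriv_Psi by blast
  then show ?case
    by (auto intro!: Rpsi_add Rpsi_mult Rpsi.intros Rpsi_deriv_xpow)
next
  case (Rpsi_modulus_mult a)
  then show ?case
    using Rpsi.Rpsi_modulus_mult[of "fls_deriv a"] by simp
qed (auto intro: Rpsi.intros)

lemma deriv_defect: "\<exists>t \<in> Rpsi. \<exists>c. fls_deriv defect = 3 * t + of_int modulus * c"
proof -
  obtain r c where r: "r \<in> Rpsi"
    and c: "fls_deriv Psi = Psi * (fls_deriv (xpow 0) * inv_lin_fls + 3 * r) + of_int modulus * c"
    using deriv_Psi by blast
  let ?Dx = "fls_deriv (xpow 0)"
  have "fls_deriv defect = ?Dx * Psi ^ 2 + lin_fls * (2 * Psi * fls_deriv Psi)"
    by (simp add: defect_def lin_fls_eq fls_deriv_power algebra_simps)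
  also have "\<dots> = 3 * (?Dx * Psi ^ 2 + 2 * lin_fls * Psi ^ 2 * r)
      + of_int modulus * (2 * lin_fls * Psi * c)"
  proof -
    have "lin_fls * (2 * Psi * (Psi * (?Dx * inv_lin_fls)))
        = 2 * Psi ^ 2 * ?Dx * (lin_fls * inv_lin_fls)"
      by (simp add: algebra_simps power2_eq_square)
    then show ?thesis
      unfolding c by (simp add: inv_lin_times_lin_fls algebra_simps power2_eq_square)
  qed
  finally show ?thesis
    using r by (intro bexI[of _ "?Dx * Psi ^ 2 + 2 * lin_fls * Psi ^ 2 * r"])
      (auto intro!: Rpsi_add Rpsi_mult Rpsi_power Rpsi_Psi Rpsi_lin Rpsi_deriv_xpow)
qed

section \<open>Hensel lifting\<close>

text \<open>\<open>filt k\<close> is \<open>(3, defect)\<^sup>k + 3\<^sup>m \<int>((z))\<close> inside \<open>Rpsi\<close>. Lifting has to follow this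
  filtration rather than the powers of \<open>3\<close>: the approximate inverse of the linearisation is exact
  only modulo \<open>defect\<close>, and \<open>defect / 3\<close> need not lie in \<open>Rpsi\<close>.\<close>

inductive_set filt :: "nat \<Rightarrow> int fls set" for k :: nat where
  filt_gen: "j \<le> k \<Longrightarrow> r \<in> Rpsi \<Longrightarrow> 3 ^ j * defect ^ (k - j) * r \<in> filt k"
| filt_modulus_mult: "of_int modulus * a \<in> filt k"
| filt_add: "a \<in> filt k \<Longrightarrow> b \<in> filt k \<Longrightarrow> a + b \<in> filt k"

lemma filt_0 [simp]: "0 \<in> filt k"
  using filt_gen[of 0 k 0] by simp

lemma filt_subset_Rpsi: "a \<in> filt k \<Longrightarrow> a \<in> Rpsi"
  by (induction rule: filt.induct)
    (auto intro!: Rpsi_mult Rpsi_power Rpsi_defect Rpsi_add Rpsi_modulus_mult)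

lemma Rpsi_subset_filt_0: "r \<in> Rpsi \<Longrightarrow> r \<in> filt 0"
  using filt_gen[of 0 0 r] by simp

lemma defect_in_filt_1: "defect \<in> filt 1"
  using filt_gen[of 0 1 1] by simp

lemma filt_mult_Rpsi: "a \<in> filt k \<Longrightarrow> r \<in> Rpsi \<Longrightarrow> r * a \<in> filt k"
proof (induction rule: filt.induct)
  case (filt_gen j r')
  then show ?case
    using filt.filt_gen[OF filt_gen(1) Rpsi_mult[OF filt_gen(3) filt_gen(2)]]
    by (simp add: algebra_simps)
next
  case (filt_modulus_mult a)
  then show ?case
    using filt.filt_modulus_mult[of "r * a"] by (simp add: algebra_simps)
qed (simp add: distrib_left filt.filt_add)

lemma filt_uminus: "a \<in> filt k \<Longrightarrow> - a \<in> filt k"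
  using filt_mult_Rpsi[of a k "fls_const (-1)"] Rpsi_const[of "-1"]
  by (simp add: fls_const_uminus[symmetric])

lemma filt_Suc_subset: "a \<in> filt (Suc k) \<Longrightarrow> a \<in> filt k"
proof (induction rule: filt.induct)
  case (filt_gen j r)
  show ?case
  proof (cases "j \<le> k")
    case True
    then show ?thesis
      using filt.filt_gen[OF True Rpsi_mult[OF Rpsi_defect filt_gen(2)]]
      by (simp add: Suc_diff_le algebra_simps)
  next
    case False
    have "3 * r \<in> Rpsi"
      using filt_gen(2) by (intro Rpsi_mult Rpsi_numeral)
    then have "3 ^ k * defect ^ (k - k) * (3 * r) \<in> filt k"
      by (rule filt.filt_gen[OF order.refl])
    moreover have "j = Suc k" using False filt_gen(1) by simp
    ultimately show ?thesis by (simp add: algebra_simps)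
  qed
qed (auto intro: filt.intros)

lemma filt_mono: "k' \<le> k \<Longrightarrow> a \<in> filt k \<Longrightarrow> a \<in> filt k'"
  by (induction k rule: dec_induct) (auto dest: filt_Suc_subset)

lemma three_mult_filt: "a \<in> filt k \<Longrightarrow> 3 * a \<in> filt (Suc k)"
proof (induction rule: filt.induct)
  case (filt_gen j r)
  then show ?case
    using filt.filt_gen[of "Suc j" "Suc k" r] by (simp add: mult.assoc)
next
  case (filt_modulus_mult a)
  then show ?case
    using filt.filt_modulus_mult[of "3 * a"] by (simp add: algebra_simps)
qed (simp add: distrib_left filt.filt_add)

lemma three_mult_Rpsi_in_filt_1: "r \<in> Rpsi \<Longrightarrow> 3 * r \<in> filt 1"
  using three_mult_filt[OF Rpsi_subset_filt_0] by (simp only: One_nat_def)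

lemma filt_mult: "a \<in> filt i \<Longrightarrow> b \<in> filt j \<Longrightarrow> a * b \<in> filt (i + j)"
proof (induction rule: filt.induct)
  case (filt_gen j1 r1)
  from filt_gen(3) show ?case
  proof (induction rule: filt.induct)
    case (filt_gen j2 r2)
    have "defect ^ (i - j1) * defect ^ (j - j2) = defect ^ ((i + j) - (j1 + j2))"
      using filt_gen(1) \<open>j1 \<le> i\<close> by (simp flip: power_add)
    then have "3 ^ j1 * defect ^ (i - j1) * r1 * (3 ^ j2 * defect ^ (j - j2) * r2)
        = 3 ^ (j1 + j2) * defect ^ ((i + j) - (j1 + j2)) * (r1 * r2)"
      by (simp add: power_add algebra_simps)
    moreover have "j1 + j2 \<le> i + j"
      using filt_gen(1) \<open>j1 \<le> i\<close> by simp
    moreover have "r1 * r2 \<in> Rpsi"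
      using \<open>r1 \<in> Rpsi\<close> filt_gen(2) by (rule Rpsi_mult)
    ultimately show ?case
      by (metis filt.filt_gen)
  next
    case (filt_modulus_mult a)
    then show ?case
      using filt.filt_modulus_mult[of "3 ^ j1 * defect ^ (i - j1) * r1 * a"]
      by (simp add: algebra_simps)
  qed (simp add: distrib_left filt.filt_add)
next
  case (filt_modulus_mult a)
  then show ?case
    using filt.filt_modulus_mult[of "a * b"] by (simp add: algebra_simps)
qed (simp add: distrib_right filt.filt_add)

lemma filt_deriv: "a \<in> filt k \<Longrightarrow> fls_deriv a \<in> filt k"
proof (induction rule: filt.induct)
  case (filt_gen j r)
  show ?case
  proof (cases "k - j")
    case 0
    then show ?thesis
      using filt.filt_gen[OF filt_gen(1) Rpsi_deriv[OF filt_gen(2)]] by simp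
  next
    case (Suc n)
    obtain t c where t: "t \<in> Rpsi" and c: "fls_deriv defect = 3 * t + of_int modulus * c"
      using deriv_defect by blast
    have dp: "fls_deriv (defect ^ (k - j)) = of_nat (Suc n) * defect ^ n * fls_deriv defect"
      by (simp only: Suc fls_deriv_power diff_Suc_1)
    have "k - Suc j = n" using Suc by simp
    then have e: "fls_deriv (3 ^ j * defect ^ (k - j) * r)
        = 3 ^ j * defect ^ (k - j) * fls_deriv r
          + 3 ^ Suc j * defect ^ (k - Suc j) * (of_nat (Suc n) * t * r)
          + of_int modulus * (3 ^ j * of_nat (Suc n) * defect ^ n * c * r)"
      by (simp add: dp c algebra_simps)
    have "Suc j \<le> k" using Suc by simp
    then have "3 ^ Suc j * defect ^ (k - Suc j) * (of_nat (Suc n) * t * r) \<in> filt k"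
      using t filt_gen(2) by (intro filt.filt_gen Rpsi_mult Rpsi_of_nat)
    moreover have "3 ^ j * defect ^ (k - j) * fls_deriv r \<in> filt k"
      using filt_gen(1,2) by (intro filt.filt_gen Rpsi_deriv)
    ultimately show ?thesis
      unfolding e by (intro filt.filt_add filt.filt_modulus_mult)
  qed
next
  case (filt_modulus_mult a)
  then show ?case
    using filt.filt_modulus_mult[of "fls_deriv a"] by simp
qed (simp add: filt.filt_add)

lemma filt_coeffs_dvd: "a \<in> filt k \<Longrightarrow> k \<le> m \<Longrightarrow> coeffs_dvd (3 ^ k) a"
proof (induction rule: filt.induct)
  case (filt_gen j r)
  obtain w where w: "defect = 3 * w"
    using defect_eq_3_mult by blast
  have "(3 :: int fls) ^ j * defect ^ (k - j) * r = 3 ^ j * 3 ^ (k - j) * (w ^ (k - j) * r)"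
    unfolding w by (simp add: power_mult_distrib algebra_simps)
  also have "(3 :: int fls) ^ j * 3 ^ (k - j) = of_int (3 ^ k)"
    using filt_gen(1) by (simp flip: power_add)
  finally show ?case
    by (simp only: coeffs_dvd_of_int_mult)
next
  case (filt_modulus_mult a)
  have "modulus = 3 ^ k * 3 ^ (m - k)"
    using filt_modulus_mult by (simp add: modulus_def flip: power_add)
  then have "of_int modulus * a = of_int (3 ^ k) * (of_int (3 ^ (m - k)) * a)"
    by (simp add: mult.assoc)
  then show ?case by (simp only: coeffs_dvd_of_int_mult)
qed (simp add: coeffs_dvd_add)

lemma deriv_ideal_filt: "deriv_ideal Rpsi (filt k)"
  by unfold_locales (auto intro: Rpsi.intros Rpsi_deriv filt_add filt_mult_Rpsi filt_deriv)

text \<open>One Newton step \<open>G \<mapsto> G - W * E(G)\<close>: since \<open>W\<close> inverts the linearisation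
  \<open>2 c\<^sub>2 G + c\<^sub>1\<close> modulo \<open>filt 1\<close>, the error moves from \<open>filt k\<close> to \<open>filt (k + 1)\<close>.\<close>

lemma hensel_step:
  assumes "1 \<le> k" "G \<in> Rpsi" "W \<in> Rpsi"
    and E: "eqn_lhs_fls c2 c1 c0 Q G \<in> filt k" and G0: "G - G0 \<in> filt 1"
    and W: "W * (2 * fls_of_poly c2 * G0 + fls_of_poly c1) - 1 \<in> filt 1"
  shows "\<exists>G' \<in> Rpsi. eqn_lhs_fls c2 c1 c0 Q G' \<in> filt (Suc k) \<and> G' - G0 \<in> filt 1"
proof -
  let ?E = "eqn_lhs_fls c2 c1 c0 Q G"
  let ?A = "2 * fls_of_poly c2 * G + fls_of_poly c1"
  define d where "d = - (W * ?E)"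
  have d: "d \<in> filt k"
    unfolding d_def by (intro filt_uminus filt_mult_Rpsi E assms(3))
  then have d1: "d \<in> filt 1" and dR: "d \<in> Rpsi"
    using assms(1) filt_mono filt_subset_Rpsi by blast+
  have "?A * W - 1 = (W * (2 * fls_of_poly c2 * G0 + fls_of_poly c1) - 1)
      + (2 * fls_of_poly c2 * W) * (G - G0)"
    by (simp add: algebra_simps)
  also have "\<dots> \<in> filt 1"
    by (intro filt_add W filt_mult_Rpsi G0 Rpsi_mult Rpsi_numeral Rpsi_fls_of_poly assms(3))
  finally have AW: "?A * W - 1 \<in> filt 1" .
  have "eqn_lhs_fls c2 c1 c0 Q (G + d)
      = - ((?A * W - 1) * ?E) + (fls_of_poly c2 * d) * d + 3 * (Qeval_fls Q (G + d) - Qeval_fls Q G)"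
    unfolding eqn_lhs_fls_def d_def by (simp add: algebra_simps power2_eq_square)
  also have "\<dots> \<in> filt (Suc k)"
  proof (intro filt_add)
    show "- ((?A * W - 1) * ?E) \<in> filt (Suc k)"
      using filt_uminus[OF filt_mult[OF AW E]] by simp
    show "(fls_of_poly c2 * d) * d \<in> filt (Suc k)"
      using filt_mult[OF filt_mult_Rpsi[OF d Rpsi_fls_of_poly] d] assms(1) filt_mono[of "Suc k" "k + k"]
      by simp
    show "3 * (Qeval_fls Q (G + d) - Qeval_fls Q G) \<in> filt (Suc k)"
      using d dR assms(2)
      by (intro three_mult_filt deriv_ideal.Qeval_fls_diff[OF deriv_ideal_filt] Rpsi_add) simp_all
  qed
  finally have "eqn_lhs_fls c2 c1 c0 Q (G + d) \<in> filt (Suc k)" .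
  moreover have "(G + d) - G0 \<in> filt 1"
    using filt_add[OF G0 d1] by (simp add: algebra_simps)
  ultimately show ?thesis
    using assms(2) dR Rpsi_add by blast
qed

lemma hensel_lifting:
  assumes "G0 \<in> Rpsi" "W \<in> Rpsi" "eqn_lhs_fls c2 c1 c0 Q G0 \<in> filt 1"
    and "W * (2 * fls_of_poly c2 * G0 + fls_of_poly c1) - 1 \<in> filt 1"
  shows "\<exists>G \<in> Rpsi. eqn_lhs_fls c2 c1 c0 Q G \<in> filt (Suc k) \<and> G - G0 \<in> filt 1"
proof (induction k)
  case 0
  show ?case using assms by (intro bexI[of _ G0]) auto
next
  case (Suc k)
  then show ?case
    using hensel_step[of "Suc k" _ W c2 c1 c0 Q G0] assms by auto
qed

section \<open>Reduction to polynomials in \<open>\<Psi>\<close>\<close>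

definition Lring :: "int fls set" where
  "Lring = {fls_X_inv ^ k * fls_of_poly p * inv_lin_fls ^ l | k p l. True}"

lemma Lring_mult: "a \<in> Lring \<Longrightarrow> b \<in> Lring \<Longrightarrow> a * b \<in> Lring"
proof -
  assume "a \<in> Lring" "b \<in> Lring"
  then obtain k p l k' p' l' where "a = fls_X_inv ^ k * fls_of_poly p * inv_lin_fls ^ l"
    "b = fls_X_inv ^ k' * fls_of_poly p' * inv_lin_fls ^ l'"
    unfolding Lring_def by blast
  then have "a * b = fls_X_inv ^ (k + k') * fls_of_poly (p * p') * inv_lin_fls ^ (l + l')"
    by (simp add: power_add algebra_simps)
  then show ?thesis
    unfolding Lring_def by blast
qed

lemma Lring_add: "a \<in> Lring \<Longrightarrow> b \<in> Lring \<Longrightarrow> a + b \<in> Lring"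
proof -
  assume "a \<in> Lring" "b \<in> Lring"
  then obtain k p l k' p' l' where ab: "a = fls_X_inv ^ k * fls_of_poly p * inv_lin_fls ^ l"
    "b = fls_X_inv ^ k' * fls_of_poly p' * inv_lin_fls ^ l'"
    unfolding Lring_def by blast
  define q where "q = monom 1 k' * p * lin eps gam ^ l' + monom 1 k * p' * lin eps gam ^ l"
  have "fls_X_inv ^ (k + k') * fls_of_poly q * inv_lin_fls ^ (l + l')
      = a * ((fls_X_inv * fls_X) ^ k' * (inv_lin_fls * lin_fls) ^ l')
        + b * ((fls_X_inv * fls_X) ^ k * (inv_lin_fls * lin_fls) ^ l)"
    unfolding ab by (simp add: q_def lin_fls_def power_add power_mult_distrib algebra_simps)
  also have "\<dots> = a + b"
    by (simp add: inv_lin_times_lin_fls fls_X_times_conv_shift mult.commute)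
  finally have "a + b = fls_X_inv ^ (k + k') * fls_of_poly q * inv_lin_fls ^ (l + l')" ..
  then show ?thesis
    unfolding Lring_def by blast
qed

lemma Lring_fls_of_poly: "fls_of_poly p \<in> Lring"
proof -
  have "fls_of_poly p = fls_X_inv ^ 0 * fls_of_poly p * inv_lin_fls ^ 0" by simp
  then show ?thesis unfolding Lring_def by blast
qed

lemma Lring_const: "fls_const c \<in> Lring"
  using Lring_fls_of_poly[of "monom c 0"] by simp

lemma Lring_X: "fls_X \<in> Lring"
  using Lring_fls_of_poly[of "monom 1 1"] by simp

lemma Lring_X_inv: "fls_X_inv \<in> Lring"
proof -
  have "fls_X_inv = fls_X_inv ^ 1 * fls_of_poly 1 * inv_lin_fls ^ 0" by simp
  then show ?thesis unfolding Lring_def by blast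
qed

lemma Lring_inv_lin: "inv_lin_fls \<in> Lring"
proof -
  have "inv_lin_fls = fls_X_inv ^ 0 * fls_of_poly 1 * inv_lin_fls ^ 1" by simp
  then show ?thesis unfolding Lring_def by blast
qed

lemma Lring_lin: "lin_fls \<in> Lring"
  by (simp add: lin_fls_def Lring_fls_of_poly)

lemma Lring_power: "a \<in> Lring \<Longrightarrow> a ^ n \<in> Lring"
  using Lring_const[of 1] by (induction n) (auto intro: Lring_mult)

lemma Lring_of_int: "of_int c \<in> Lring"
  using Lring_const[of c] by (simp add: fls_of_int)

definition psi_reduced :: "int fls set" where
  "psi_reduced = {(\<Sum>i<2 * m. a i * Psi ^ i) + of_int modulus * c | a c. \<forall>i. a i \<in> Lring}"

lemma psi_reduced_add: "r \<in> psi_reduced \<Longrightarrow> s \<in> psi_reduced \<Longrightarrow> r + s \<in> psi_reduced"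
proof -
  assume "r \<in> psi_reduced" "s \<in> psi_reduced"
  then obtain a c b c' where "\<forall>i. a i \<in> Lring" "r = (\<Sum>i<2 * m. a i * Psi ^ i) + of_int modulus * c"
    and "\<forall>i. b i \<in> Lring" "s = (\<Sum>i<2 * m. b i * Psi ^ i) + of_int modulus * c'"
    unfolding psi_reduced_def by blast
  then show ?thesis
    unfolding psi_reduced_def
    by (intro CollectI exI[of _ "\<lambda>i. a i + b i"] exI[of _ "c + c'"])
      (auto simp: distrib_right sum.distrib algebra_simps intro: Lring_add)
qed

lemma psi_reduced_Lring_mult: "l \<in> Lring \<Longrightarrow> r \<in> psi_reduced \<Longrightarrow> l * r \<in> psi_reduced"
proof -
  assume "l \<in> Lring" "r \<in> psi_reduced"
  then obtain a c where "\<forall>i. a i \<in> Lring" "r = (\<Sum>i<2 * m. a i * Psi ^ i) + of_int modulus * c"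
    unfolding psi_reduced_def by blast
  with \<open>l \<in> Lring\<close> show ?thesis
    unfolding psi_reduced_def
    by (intro CollectI exI[of _ "\<lambda>i. l * a i"] exI[of _ "l * c"])
      (auto simp: distrib_left sum_distrib_left algebra_simps intro: Lring_mult)
qed

lemma psi_reduced_modulus_mult: "of_int modulus * c \<in> psi_reduced"
  unfolding psi_reduced_def using Lring_of_int[of 0]
  by (intro CollectI exI[of _ "\<lambda>_. 0"] exI[of _ c]) simp

lemma psi_reduced_sum: "(\<And>i. i \<in> A \<Longrightarrow> f i \<in> psi_reduced) \<Longrightarrow> sum f A \<in> psi_reduced"
  using psi_reduced_modulus_mult[of 0]
  by (induction A rule: infinite_finite_induct) (auto intro: psi_reduced_add)

lemma Psi_power_in_psi_reduced_low: "j < 2 * m \<Longrightarrow> Psi ^ j \<in> psi_reduced"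
proof -
  assume j: "j < 2 * m"
  have "(\<Sum>i<2 * m. (if i = j then 1 else 0) * Psi ^ i) = (\<Sum>i<2 * m. if i = j then Psi ^ i else 0)"
    by (intro sum.cong) auto
  then have "Psi ^ j = (\<Sum>i<2 * m. (if i = j then 1 else 0) * Psi ^ i) + of_int modulus * 0"
    using j by simp
  moreover have "\<forall>i. (if i = j then 1 else 0) \<in> Lring"
    using Lring_const[of 0] Lring_const[of 1] by simp
  ultimately show ?thesis
    unfolding psi_reduced_def by (intro CollectI exI[of _ "\<lambda>i. if i = j then 1 else 0"] exI[of _ 0] conjI)
qed

text \<open>Because \<open>lin_fls * Psi ^ 2 = 1 + defect\<close> with \<open>3\<close> dividing \<open>defect\<close>, the binomial
  expansion of \<open>(1 + defect) ^ m\<close> rewrites \<open>Psi ^ (2 m)\<close> modulo \<open>3 ^ m\<close> in lower even powers.\<close>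

lemma Psi_power_2m:
  "\<exists>c. Psi ^ (2 * m) = (\<Sum>k<m. \<Sum>i\<le>k. (inv_lin_fls ^ m * of_nat (m choose k) *
      (of_nat (k choose i) * (-1) ^ (k - i) * lin_fls ^ i)) * Psi ^ (2 * i)) + of_int modulus * c"
proof -
  obtain w where w: "defect = 3 * w"
    using defect_eq_3_mult by blast
  have defect_power: "defect ^ k = (\<Sum>i\<le>k. (of_nat (k choose i) * (-1) ^ (k - i) * lin_fls ^ i) * Psi ^ (2 * i))" for k
  proof -
    have "defect ^ k = (lin_fls * Psi ^ 2 + (-1)) ^ k"
      by (simp add: defect_def)
    also have "\<dots> = (\<Sum>i\<le>k. of_nat (k choose i) * (lin_fls * Psi ^ 2) ^ i * (-1) ^ (k - i))"
      by (rule binomial_ring)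
    also have "\<dots> = (\<Sum>i\<le>k. of_nat (k choose i) * (lin_fls ^ i * Psi ^ (2 * i)) * (-1) ^ (k - i))"
      by (simp only: power_mult_distrib power_mult)
    finally show ?thesis
      by (simp add: mult_ac)
  qed
  have "(1 + defect) ^ m = (\<Sum>k\<le>m. of_nat (m choose k) * defect ^ k * 1 ^ (m - k))"
    using binomial_ring[of defect 1 m] by (simp add: add.commute)
  also have "\<dots> = (\<Sum>k<m. of_nat (m choose k) * defect ^ k) + of_int modulus * w ^ m"
    by (simp add: lessThan_Suc_atMost[symmetric] w power_mult_distrib modulus_def)
  finally have binom: "(1 + defect) ^ m = (\<Sum>k<m. of_nat (m choose k) * defect ^ k) + of_int modulus * w ^ m" .
  have "Psi ^ (2 * m) = (inv_lin_fls * lin_fls) ^ m * (Psi ^ 2) ^ m"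
    by (simp add: inv_lin_times_lin_fls power_mult)
  also have "\<dots> = inv_lin_fls ^ m * (1 + defect) ^ m"
    by (simp add: defect_def power_mult_distrib mult_ac)
  also have "\<dots> = (\<Sum>k<m. \<Sum>i\<le>k. (inv_lin_fls ^ m * of_nat (m choose k) *
      (of_nat (k choose i) * (-1) ^ (k - i) * lin_fls ^ i)) * Psi ^ (2 * i))
      + of_int modulus * (inv_lin_fls ^ m * w ^ m)"
    unfolding binom defect_power by (simp add: distrib_left sum_distrib_left mult_ac)
  finally show ?thesis by blast
qed

lemma Psi_power_in_psi_reduced: "Psi ^ j \<in> psi_reduced"
proof (induction j rule: less_induct)
  case (less j)
  show ?case
  proof (cases "j < 2 * m")
    case False
    obtain c where c: "Psi ^ (2 * m) = (\<Sum>k<m. \<Sum>i\<le>k. (inv_lin_fls ^ m * of_nat (m choose k) *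
        (of_nat (k choose i) * (-1) ^ (k - i) * lin_fls ^ i)) * Psi ^ (2 * i)) + of_int modulus * c"
      using Psi_power_2m by blast
    have "Psi ^ j = Psi ^ (j - 2 * m) * Psi ^ (2 * m)"
      using False by (simp flip: power_add)
    also have "\<dots> = (\<Sum>k<m. \<Sum>i\<le>k. (inv_lin_fls ^ m * of_nat (m choose k) *
        (of_nat (k choose i) * (-1) ^ (k - i) * lin_fls ^ i)) * Psi ^ (j - 2 * m + 2 * i))
        + of_int modulus * (Psi ^ (j - 2 * m) * c)"
      unfolding c by (simp add: distrib_left sum_distrib_left power_add mult_ac)
    also have "\<dots> \<in> psi_reduced"
    proof (intro psi_reduced_add psi_reduced_modulus_mult psi_reduced_sum psi_reduced_Lring_mult less.IH)
      fix k i assume "k \<in> {..<m}" "i \<in> {..k}"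
      then show "j - 2 * m + 2 * i < j"
        using False by auto
      show "inv_lin_fls ^ m * of_nat (m choose k) * (of_nat (k choose i) * (-1) ^ (k - i) * lin_fls ^ i) \<in> Lring"
        using Lring_of_int[of "int (m choose k)"] Lring_of_int[of "int (k choose i) * (-1) ^ (k - i)"]
        by (auto intro!: Lring_mult Lring_power Lring_inv_lin Lring_lin)
    qed
    finally show ?thesis .
  qed (rule Psi_power_in_psi_reduced_low)
qed

lemma psi_reduced_mult: "r \<in> psi_reduced \<Longrightarrow> s \<in> psi_reduced \<Longrightarrow> r * s \<in> psi_reduced"
proof -
  assume "r \<in> psi_reduced" "s \<in> psi_reduced"
  then obtain a c where a: "\<forall>i. a i \<in> Lring" and r: "r = (\<Sum>i<2 * m. a i * Psi ^ i) + of_int modulus * c"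
    unfolding psi_reduced_def by blast
  obtain b d where b: "\<forall>i. b i \<in> Lring" and s: "s = (\<Sum>i<2 * m. b i * Psi ^ i) + of_int modulus * d"
    using \<open>s \<in> psi_reduced\<close> unfolding psi_reduced_def by blast
  have "r * s = (\<Sum>i<2 * m. \<Sum>i'<2 * m. (a i * b i') * Psi ^ (i + i'))
      + of_int modulus * (c * s + (\<Sum>i<2 * m. a i * Psi ^ i) * d)"
    unfolding r s by (simp add: sum_product power_add algebra_simps)
  also have "\<dots> \<in> psi_reduced"
    using a b by (intro psi_reduced_add psi_reduced_modulus_mult psi_reduced_sum psi_reduced_Lring_mult
        Lring_mult Psi_power_in_psi_reduced) auto
  finally show ?thesis .
qed

lemma Lring_subset_psi_reduced: "l \<in> Lring \<Longrightarrow> l \<in> psi_reduced"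
  using psi_reduced_Lring_mult[OF _ Psi_power_in_psi_reduced[of 0]] by simp

lemma Rpsi_subset_psi_reduced: "r \<in> Rpsi \<Longrightarrow> r \<in> psi_reduced"
proof (induction rule: Rpsi.induct)
  case Rpsi_Psi
  show ?case using Psi_power_in_psi_reduced[of 1] by simp
qed (auto intro: psi_reduced_add psi_reduced_mult psi_reduced_modulus_mult Lring_subset_psi_reduced
    Lring_const Lring_X Lring_X_inv Lring_inv_lin)

lemma Lring_elem_eq_shift:
  "fls_X_inv ^ k * fls_of_poly p * inv_lin_fls ^ l
    = fls_shift (int k) (fps_to_fls (fps_of_poly p * inv_lin eps gam ^ l))"
  by (simp add: fls_X_inv_power_times_conv_shift(1)[symmetric] fls_of_poly_def inv_lin_fls_def
      fls_times_fps_to_fls fps_to_fls_power mult.assoc)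

lemma psi_reduced_normal_form:
  assumes "r \<in> psi_reduced"
  shows "\<exists>p k l c. r = (\<Sum>i<2 * m.
      fls_shift (int (k i)) (fps_to_fls (fps_of_poly (p i) * inv_lin eps gam ^ l i))
      * fps_to_fls (psi eps gam ^ i)) + of_int modulus * c"
proof -
  obtain a c where a: "\<forall>i. a i \<in> Lring" and r: "r = (\<Sum>i<2 * m. a i * Psi ^ i) + of_int modulus * c"
    using assms unfolding psi_reduced_def by blast
  have "\<forall>i. \<exists>kpl. a i = fls_X_inv ^ fst kpl * fls_of_poly (fst (snd kpl)) * inv_lin_fls ^ snd (snd kpl)"
    using a unfolding Lring_def by fastforce
  then obtain kpl where kpl:
    "\<And>i. a i = fls_X_inv ^ fst (kpl i) * fls_of_poly (fst (snd (kpl i))) * inv_lin_fls ^ snd (snd (kpl i))"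
    by metis
  define k where "k i = fst (kpl i)" for i
  define p where "p i = fst (snd (kpl i))" for i
  define l where "l i = snd (snd (kpl i))" for i
  have "a i * Psi ^ i = fls_shift (int (k i)) (fps_to_fls (fps_of_poly (p i) * inv_lin eps gam ^ l i))
      * fps_to_fls (psi eps gam ^ i)" for i
    unfolding kpl k_def p_def l_def Lring_elem_eq_shift Psi_def fps_to_fls_power ..
  then show ?thesis
    using r by (intro exI[of _ p] exI[of _ k] exI[of _ l] exI[of _ c]) simp
qed

end

section \<open>The quadratic equation\<close>

locale quadratic_setting = psi_setting +
  fixes c0 c1 c2 :: "int poly" and Q :: intpolyQ and F :: "int fps"
    and e1 e2 f1 f2 :: nat and p2 q3 :: "int poly"
  assumes c2_eq: "c2 = monom 1 e1 * lin eps gam ^ e2 + smult 3 p2"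
    and disc_eq: "c1 ^ 2 - c0 * c2 = monom 1 (2 * f1) * lin eps gam ^ (2 * f2 + 1) + smult 3 q3"
    and F_solves: "eqn_lhs c2 c1 c0 Q F = 0"
begin

abbreviation "C0 \<equiv> fls_of_poly c0"
abbreviation "C1 \<equiv> fls_of_poly c1"
abbreviation "C2 \<equiv> fls_of_poly c2"
abbreviation "E \<equiv> eqn_lhs_fls c2 c1 c0 Q"

definition lead :: "int fls" where "lead = fls_X ^ e1 * lin_fls ^ e2"
definition lead_inv :: "int fls" where "lead_inv = fls_X_inv ^ e1 * inv_lin_fls ^ e2"
definition disc :: "int fls" where "disc = fls_X ^ (2 * f1) * lin_fls ^ (2 * f2 + 1)"
definition sqrt_disc :: "int fls" where "sqrt_disc = fls_X ^ f1 * lin_fls ^ (f2 + 1) * Psi"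
definition lin_part :: "int fls" where "lin_part = 2 * C2 * fps_to_fls F + C1"

lemma F_solves_fls: "E (fps_to_fls F) = 0"
  using arg_cong[OF F_solves, of fps_to_fls] by (simp add: fps_to_fls_eqn_lhs)

lemma C2_eq_lead: "C2 = lead + 3 * fls_of_poly p2"
  using arg_cong[OF c2_eq, of fls_of_poly] by (simp add: lead_def lin_fls_def)

lemma C1_sq_minus_eq_disc: "C1 ^ 2 - C0 * C2 = disc + 3 * fls_of_poly q3"
  using arg_cong[OF disc_eq, of fls_of_poly] by (simp add: disc_def lin_fls_def)

lemma lead_inv_lead: "lead_inv * lead = 1"
proof -
  have "lead_inv * lead = (fls_X_inv * fls_X) ^ e1 * (inv_lin_fls * lin_fls) ^ e2"
    by (simp add: lead_inv_def lead_def power_mult_distrib algebra_simps)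
  then show ?thesis
    by (simp add: inv_lin_times_lin_fls fls_X_times_conv_shift mult.commute)
qed

lemma sqrt_disc_sq: "sqrt_disc ^ 2 = disc + disc * defect"
proof -
  have "sqrt_disc ^ 2 = fls_X ^ (2 * f1) * lin_fls ^ (2 * f2 + 1) * (lin_fls * Psi ^ 2)"
    by (simp add: sqrt_disc_def power_mult_distrib algebra_simps flip: power_mult power_Suc)
  then show ?thesis
    by (simp add: disc_def defect_def algebra_simps)
qed

lemma Rpsi_lead_inv: "lead_inv \<in> Rpsi"
  unfolding lead_inv_def by (intro Rpsi_mult Rpsi_power Rpsi_X_inv Rpsi_inv_lin)

lemma Rpsi_disc: "disc \<in> Rpsi"
  unfolding disc_def by (intro Rpsi_mult Rpsi_power Rpsi_X Rpsi_lin)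

lemma Rpsi_sqrt_disc: "sqrt_disc \<in> Rpsi"
  unfolding sqrt_disc_def by (intro Rpsi_mult Rpsi_power Rpsi_X Rpsi_lin Rpsi_Psi)

lemma coeffs_dvd_lin_part_sq: "coeffs_dvd 3 ((lin_part - sqrt_disc) * (lin_part + sqrt_disc))"
proof -
  have quad: "C2 * (fps_to_fls F) ^ 2 + C1 * fps_to_fls F + C0 = 3 * (- Qeval_fls Q (fps_to_fls F))"
    using F_solves_fls by (simp add: eqn_lhs_fls_def algebra_simps eq_neg_iff_add_eq_0)
  have "(lin_part - sqrt_disc) * (lin_part + sqrt_disc)
      = 4 * C2 * (C2 * (fps_to_fls F) ^ 2 + C1 * fps_to_fls F + C0)
        + (C1 ^ 2 - C0 * C2) - 3 * (C0 * C2) - sqrt_disc ^ 2"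
    by (simp add: lin_part_def algebra_simps power2_eq_square)
  also have "\<dots> = 3 * (- 4 * C2 * Qeval_fls Q (fps_to_fls F) + fls_of_poly q3 - C0 * C2) - disc * defect"
    unfolding quad C1_sq_minus_eq_disc sqrt_disc_sq by (simp add: algebra_simps)
  finally show ?thesis
    by (simp only:) (intro coeffs_dvd_diff coeffs_dvd_mult_left coeffs_dvd_defect coeffs_dvd_numeral_mult)
qed

lemma not_coeffs_dvd_disc: "\<not> coeffs_dvd 3 disc"
proof
  let ?d = "fps_X ^ (2 * f1) * (1 + fps_const eps * fps_X ^ gam) ^ (2 * f2 + 1) :: int fps"
  assume "coeffs_dvd 3 disc"
  moreover have "disc = fps_to_fls ?d"
    by (simp add: disc_def lin_fls_eq xpow_eq_fps_to_fls fls_times_fps_to_fls fps_to_fls_power)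
  ultimately have "3 dvd ?d $ (2 * f1)"
    by (simp add: coeffs_dvd_fps_to_fls)
  moreover have "?d $ (2 * f1) = 1"
    using gam_pos by (simp add: fps_X_power_mult_nth fps_power_zeroth power_0_left)
  ultimately show False by simp
qed

lemma not_coeffs_dvd_lin_part: "\<not> coeffs_dvd 3 lin_part"
proof
  assume "coeffs_dvd 3 lin_part"
  then have "coeffs_dvd 3 (lin_part * lin_part)"
    by (rule coeffs_dvd_mult_right)
  then have "coeffs_dvd 3 (lin_part * lin_part - (lin_part - sqrt_disc) * (lin_part + sqrt_disc) - disc * defect)"
    using coeffs_dvd_lin_part_sq coeffs_dvd_mult_left[OF coeffs_dvd_defect]
    by (intro coeffs_dvd_diff)
  moreover have "lin_part * lin_part - (lin_part - sqrt_disc) * (lin_part + sqrt_disc) - disc * defect = disc"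
    by (simp add: sqrt_disc_sq[unfolded power2_eq_square] algebra_simps)
  ultimately show False
    using not_coeffs_dvd_disc by simp
qed

lemma sign_choice: "\<exists>\<sigma> :: int. \<sigma>\<^sup>2 = 1 \<and> coeffs_dvd 3 (lin_part - of_int \<sigma> * sqrt_disc)"
proof -
  have "prime (3 :: int)" by simp
  from coeffs_dvd_prime_mult[OF this coeffs_dvd_lin_part_sq] show ?thesis
  proof
    assume "coeffs_dvd 3 (lin_part - sqrt_disc)"
    then show ?thesis by (intro exI[of _ 1]) simp
  next
    assume "coeffs_dvd 3 (lin_part + sqrt_disc)"
    then show ?thesis by (intro exI[of _ "-1"]) simp
  qed
qed

lemma C1_sq_eq: "C1 ^ 2 = C0 * lead + 3 * (C0 * fls_of_poly p2 + fls_of_poly q3) + disc"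
  using C1_sq_minus_eq_disc unfolding C2_eq_lead by (simp add: algebra_simps)

definition root0 :: "int \<Rightarrow> int fls" where
  "root0 \<sigma> = lead_inv * (C1 - of_int \<sigma> * sqrt_disc)"

definition newton_inv :: "int \<Rightarrow> int fls" where
  "newton_inv \<sigma> = of_int \<sigma> * fls_X_inv ^ f1 * inv_lin_fls ^ f2 * Psi"

lemma Rpsi_root0: "root0 \<sigma> \<in> Rpsi"
  unfolding root0_def
  by (intro Rpsi_mult Rpsi_diff Rpsi_lead_inv Rpsi_fls_of_poly Rpsi_of_int Rpsi_sqrt_disc)

lemma Rpsi_newton_inv: "newton_inv \<sigma> \<in> Rpsi"
  unfolding newton_inv_def
  by (intro Rpsi_mult Rpsi_power Rpsi_X_inv Rpsi_inv_lin Rpsi_Psi Rpsi_of_int)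

lemma root0_cong_F:
  assumes "coeffs_dvd 3 (lin_part - of_int \<sigma> * sqrt_disc)"
  shows "coeffs_dvd 3 (fps_to_fls F - root0 \<sigma>)"
proof -
  let ?P2 = "fls_of_poly p2" and ?F = "fps_to_fls F"
  have "lead_inv * (3 * (C2 * ?F) - 3 * (?P2 * ?F) - (lin_part - of_int \<sigma> * sqrt_disc))
      = (lead_inv * lead) * ?F - root0 \<sigma>"
    by (simp add: lin_part_def root0_def C2_eq_lead algebra_simps)
  then have "?F - root0 \<sigma>
      = lead_inv * (3 * (C2 * ?F) - 3 * (?P2 * ?F) - (lin_part - of_int \<sigma> * sqrt_disc))"
    by (simp add: lead_inv_lead)
  then show ?thesis
    using assms by (simp add: coeffs_dvd_diff coeffs_dvd_mult_left)
qed

text \<open>Modulo \<open>3\<close>, \<open>root0\<close> is the root \<open>(- c\<^sub>1 \<pm> \<surd>disc) / (2 c\<^sub>2)\<close> of the quadratic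
  (as \<open>2 \<equiv> -1\<close>); the error is \<open>3 * (\<dots>) + defect * (\<dots>)\<close> because \<open>sqrt_disc ^ 2 = disc * (1 + defect)\<close>.\<close>

lemma eqn_lhs_root0:
  assumes "\<sigma>\<^sup>2 = 1"
  shows "E (root0 \<sigma>) \<in> filt 1"
proof -
  let ?G = "root0 \<sigma>" and ?s = "of_int \<sigma> :: int fls"
  let ?P2 = "fls_of_poly p2" and ?Q3 = "fls_of_poly q3"
  let ?R = "?P2 * ?G ^ 2 + Qeval_fls Q ?G + C0 + lead_inv * (2 * C0 * ?P2 + disc + 2 * ?Q3)
      - lead_inv * ?s * C1 * sqrt_disc"
  have s2: "?s ^ 2 = 1"
    using assms by (metis of_int_1 of_int_power)
  have "C2 * ?G ^ 2 = (lead_inv * lead) * (lead_inv * (C1 - ?s * sqrt_disc) ^ 2) + 3 * ?P2 * ?G ^ 2"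
    by (simp add: root0_def C2_eq_lead algebra_simps power2_eq_square)
  then have "E ?G = lead_inv * (C1 - ?s * sqrt_disc) ^ 2 + C1 * ?G + 3 * ?P2 * ?G ^ 2 + C0
      + 3 * Qeval_fls Q ?G"
    by (simp add: eqn_lhs_fls_def lead_inv_lead)
  also have "\<dots> = lead_inv * (2 * C1 ^ 2 + ?s ^ 2 * sqrt_disc ^ 2) - 3 * lead_inv * ?s * C1 * sqrt_disc
      + 3 * ?P2 * ?G ^ 2 + C0 + 3 * Qeval_fls Q ?G"
    by (simp add: root0_def algebra_simps power2_eq_square)
  also have "\<dots> = (lead_inv * lead) * (2 * C0) + lead_inv * (3 * (2 * C0 * ?P2 + disc + 2 * ?Q3)
      + disc * defect) - 3 * lead_inv * ?s * C1 * sqrt_disc + 3 * ?P2 * ?G ^ 2 + C0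
      + 3 * Qeval_fls Q ?G"
    unfolding s2 sqrt_disc_sq C1_sq_eq by (simp add: algebra_simps)
  also have "\<dots> = 3 * ?R + defect * (lead_inv * disc)"
    unfolding lead_inv_lead by (simp add: algebra_simps)
  finally have e: "E ?G = 3 * ?R + defect * (lead_inv * disc)" .
  have "?R \<in> Rpsi"
    by (intro Rpsi_add Rpsi_diff Rpsi_mult Rpsi_power Rpsi_fls_of_poly Rpsi_root0 Rpsi_lead_inv
        Rpsi_disc Rpsi_sqrt_disc Rpsi_of_int Rpsi_numeral
        deriv_ideal.Qeval_fls_closed[OF deriv_ideal_filt])
  then have "3 * ?R \<in> filt 1"
    by (rule three_mult_Rpsi_in_filt_1)
  moreover have "defect * (lead_inv * disc) \<in> filt 1"
    using filt_mult_Rpsi[OF defect_in_filt_1, of "lead_inv * disc"] Rpsi_lead_inv Rpsi_disc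
    by (simp add: Rpsi_mult mult.commute)
  ultimately show ?thesis
    unfolding e by (rule filt_add)
qed

lemma newton_inv_root0:
  assumes "\<sigma>\<^sup>2 = 1"
  shows "newton_inv \<sigma> * (2 * C2 * root0 \<sigma> + C1) - 1 \<in> filt 1"
proof -
  let ?G = "root0 \<sigma>" and ?W = "newton_inv \<sigma>" and ?s = "of_int \<sigma> :: int fls"
  have s2: "?s ^ 2 = 1"
    using assms by (metis of_int_1 of_int_power)
  have "?W * sqrt_disc
      = ?s * ((fls_X_inv * fls_X) ^ f1 * (inv_lin_fls * lin_fls) ^ f2 * (lin_fls * Psi ^ 2))"
    by (simp add: newton_inv_def sqrt_disc_def power_mult_distrib algebra_simps power2_eq_square)
  then have WS: "?W * sqrt_disc = ?s * (1 + defect)"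
    by (simp add: inv_lin_times_lin_fls fls_X_times_conv_shift mult.commute defect_def)
  have "2 * C2 * ?G + C1 = 2 * (lead_inv * lead) * (C1 - ?s * sqrt_disc) + 6 * fls_of_poly p2 * ?G + C1"
    by (simp add: C2_eq_lead root0_def algebra_simps)
  also have "\<dots> = 3 * (C1 + 2 * fls_of_poly p2 * ?G - ?s * sqrt_disc) + ?s * sqrt_disc"
    unfolding lead_inv_lead by (simp add: algebra_simps)
  finally have lin: "2 * C2 * ?G + C1 = 3 * (C1 + 2 * fls_of_poly p2 * ?G - ?s * sqrt_disc) + ?s * sqrt_disc" .
  have "?W * (2 * C2 * ?G + C1) - 1
      = 3 * (?W * (C1 + 2 * fls_of_poly p2 * ?G - ?s * sqrt_disc)) + ?s * (?W * sqrt_disc) - 1"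
    unfolding lin by (simp add: algebra_simps)
  also have "\<dots> = 3 * (?W * (C1 + 2 * fls_of_poly p2 * ?G - ?s * sqrt_disc)) + (?s ^ 2 * (1 + defect) - 1)"
    unfolding WS by (simp add: algebra_simps power2_eq_square)
  also have "\<dots> = 3 * (?W * (C1 + 2 * fls_of_poly p2 * ?G - ?s * sqrt_disc)) + defect"
    unfolding s2 by simp
  also have "\<dots> \<in> filt 1"
  proof (rule filt_add[OF _ defect_in_filt_1])
    have "?W * (C1 + 2 * fls_of_poly p2 * ?G - ?s * sqrt_disc) \<in> Rpsi"
      by (intro Rpsi_mult Rpsi_add Rpsi_diff Rpsi_newton_inv Rpsi_fls_of_poly Rpsi_numeral
          Rpsi_root0 Rpsi_of_int Rpsi_sqrt_disc)
    then show "3 * (?W * (C1 + 2 * fls_of_poly p2 * ?G - ?s * sqrt_disc)) \<in> filt 1"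
      by (rule three_mult_Rpsi_in_filt_1)
  qed
  finally show ?thesis .
qed

lemma solution_lift_step:
  assumes "1 \<le> k" "coeffs_dvd (3 ^ Suc k) (E G)" "coeffs_dvd (3 ^ k) (G - fps_to_fls F)"
  shows "coeffs_dvd (3 ^ Suc k) (G - fps_to_fls F)"
proof -
  let ?F = "fps_to_fls F" and ?N = "of_int (3 ^ k) :: int fls"
  obtain D where D: "G - ?F = ?N * D"
    using coeffs_dvd_imp_eq_mult[OF _ assms(3)] by auto
  have "coeffs_dvd (3 ^ k) (Qeval_fls Q G - Qeval_fls Q ?F)"
    using deriv_ideal.Qeval_fls_diff[OF deriv_ideal_coeffs_dvd] assms(3) by simp
  then have "coeffs_dvd (3 * 3 ^ k) (of_int 3 * (Qeval_fls Q G - Qeval_fls Q ?F))"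
    by (rule coeffs_dvd_scale)
  then have "coeffs_dvd (3 ^ Suc k) (3 * (Qeval_fls Q G - Qeval_fls Q ?F))"
    by (simp only: of_int_numeral power_Suc)
  moreover have "E G = (G - ?F) * (lin_part + C2 * (G - ?F)) + 3 * (Qeval_fls Q G - Qeval_fls Q ?F)"
    using F_solves_fls by (simp add: eqn_lhs_fls_def lin_part_def algebra_simps power2_eq_square)
  then have "?N * (D * (lin_part + C2 * (?N * D))) = E G - 3 * (Qeval_fls Q G - Qeval_fls Q ?F)"
    unfolding D by (simp add: mult.assoc)
  ultimately have "coeffs_dvd (3 ^ k * 3) (?N * (D * (lin_part + C2 * (?N * D))))"
    using coeffs_dvd_diff[OF assms(2)] by (simp only: power_Suc2)
  then have "coeffs_dvd 3 (D * (lin_part + C2 * (?N * D)))"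
    by (rule coeffs_dvd_cancel[rotated]) simp
  moreover have "coeffs_dvd 3 (?N * (C2 * D * D))"
    using assms(1) by (intro coeffs_dvd_dvd_trans[OF _ coeffs_dvd_of_int_mult]) (simp add: dvd_power)
  ultimately have "coeffs_dvd 3 (D * (lin_part + C2 * (?N * D)) - ?N * (C2 * D * D))"
    by (rule coeffs_dvd_diff)
  then have "coeffs_dvd 3 (D * lin_part)"
    by (simp add: algebra_simps)
  then have "coeffs_dvd 3 D"
    using coeffs_dvd_prime_mult[of 3 D lin_part] not_coeffs_dvd_lin_part by simp
  then show ?thesis
    unfolding D using coeffs_dvd_scale[of 3 D "3 ^ k"] by (simp add: mult.commute)
qed

lemma solution_unique:
  assumes "coeffs_dvd modulus (E G)" "coeffs_dvd 3 (G - fps_to_fls F)"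
  shows "coeffs_dvd modulus (G - fps_to_fls F)"
proof -
  have "coeffs_dvd (3 ^ Suc k) (G - fps_to_fls F)" if "k < m" for k
    using that
  proof (induction k)
    case (Suc k)
    have "(3 :: int) ^ Suc (Suc k) dvd modulus"
      using Suc.prems unfolding modulus_def by (intro le_imp_power_dvd) simp
    then have "coeffs_dvd (3 ^ Suc (Suc k)) (E G)"
      using assms(1) by (rule coeffs_dvd_dvd_trans)
    then show ?case
      using solution_lift_step[of "Suc k" G] Suc by simp
  qed (use assms(2) in simp)
  from this[of "m - 1"] show ?thesis
    using m_pos by (simp add: modulus_def)
qed

lemma exists_Rpsi_approximation: "\<exists>G \<in> Rpsi. coeffs_dvd modulus (G - fps_to_fls F)"
proof -
  obtain \<sigma> where \<sigma>: "\<sigma>\<^sup>2 = 1" "coeffs_dvd 3 (lin_part - of_int \<sigma> * sqrt_disc)"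
    using sign_choice by blast
  obtain G where G: "G \<in> Rpsi" "E G \<in> filt (Suc (m - 1))" "G - root0 \<sigma> \<in> filt 1"
    using hensel_lifting[OF Rpsi_root0 Rpsi_newton_inv eqn_lhs_root0[OF \<sigma>(1)] newton_inv_root0[OF \<sigma>(1)]]
    by blast
  have "coeffs_dvd modulus (E G)"
    using filt_coeffs_dvd[OF G(2)] m_pos by (simp add: modulus_def)
  moreover have "coeffs_dvd 3 (G - root0 \<sigma>)"
    using filt_coeffs_dvd[OF G(3)] m_pos by simp
  then have "coeffs_dvd 3 (G - fps_to_fls F)"
    using coeffs_dvd_diff[OF _ root0_cong_F[OF \<sigma>(2)]] by fastforce
  ultimately show ?thesis
    using G(1) solution_unique by blast
qed

lemma F_psi_expansion:
  "\<exists>p k l. coeffs_dvd modulus (fps_to_fls F - (\<Sum>i<2 * m.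
      fls_shift (int (k i)) (fps_to_fls (fps_of_poly (p i) * inv_lin eps gam ^ l i))
      * fps_to_fls (psi eps gam ^ i)))"
proof -
  obtain G where "G \<in> Rpsi" and G: "coeffs_dvd modulus (G - fps_to_fls F)"
    using exists_Rpsi_approximation by blast
  then obtain p k l c where "G = (\<Sum>i<2 * m.
      fls_shift (int (k i)) (fps_to_fls (fps_of_poly (p i) * inv_lin eps gam ^ l i))
      * fps_to_fls (psi eps gam ^ i)) + of_int modulus * c" (is "G = ?S + _")
    using psi_reduced_normal_form Rpsi_subset_psi_reduced by blast
  then have "fps_to_fls F - ?S = of_int modulus * c - (G - fps_to_fls F)"
    by simp
  then have "coeffs_dvd modulus (fps_to_fls F - ?S)"
    using coeffs_dvd_diff[OF coeffs_dvd_of_int_mult G] by (simp only:)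
  then show ?thesis by blast
qed

end

text \<open>Neither are \<open>\<alpha> > 0\<close> and \<open>\<epsilon> = \<plusminus>1\<close>.\<close>

theorem theorem6p1:
  fixes \<alpha> \<gamma> :: nat and \<epsilon> :: int and F :: "int fps"
    and c0 c1 c2 :: "int poly" and Q :: intpolyQ
  assumes "\<alpha> > 0" and "\<gamma> > 0" and "\<epsilon> \<in> {1, -1}"
    and "eqn_lhs c2 c1 c0 Q F = 0"
    and "\<exists>e1 e2::nat. poly_cong 3 c2 (monom 1 e1 * lin \<epsilon> \<gamma> ^ e2)"
    and "\<exists>f1 f2::nat. poly_cong 3 (c1 ^ 2 - c0 * c2)
                          (monom 1 (2 * f1) * lin \<epsilon> \<gamma> ^ (2 * f2 + 1))"
    and "\<forall>G H. fps_cong (3 ^ (3 ^ \<alpha>)) (eqn_lhs c2 c1 c0 Q G) 0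
              \<and> fps_cong (3 ^ (3 ^ \<alpha>)) (eqn_lhs c2 c1 c0 Q H) 0
              \<longrightarrow> fps_cong (3 ^ (3 ^ \<alpha>)) G H"
  shows "\<exists>(p :: nat \<Rightarrow> int poly) (k :: nat \<Rightarrow> nat) (l :: nat \<Rightarrow> nat).
           fls_cong (3 ^ (3 ^ \<alpha>)) (fps_to_fls F)
             (\<Sum>i<2 * 3 ^ \<alpha>.
                fls_shift (int (k i)) (fps_to_fls (fps_of_poly (p i) * inv_lin \<epsilon> \<gamma> ^ l i))
                * fps_to_fls (psi \<epsilon> \<gamma> ^ i))"
proof -
  obtain e1 e2 p2 where c2: "c2 = monom 1 e1 * lin \<epsilon> \<gamma> ^ e2 + smult 3 p2"
    using assms(5) poly_cong_imp_eq_smult by blast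
  obtain f1 f2 q3 where disc: "c1 ^ 2 - c0 * c2 = monom 1 (2 * f1) * lin \<epsilon> \<gamma> ^ (2 * f2 + 1) + smult 3 q3"
    using assms(6) poly_cong_imp_eq_smult by blast
  interpret quadratic_setting \<epsilon> \<gamma> "3 ^ \<alpha>" c0 c1 c2 Q F e1 e2 f1 f2 p2 q3
    using assms(2,4) c2 disc by unfold_locales simp_all
  from F_psi_expansion show ?thesis
    unfolding fls_cong_iff_coeffs_dvd modulus_def by blast
qed

end
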